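(* Let $\varepsilon\in(0,1/2]$, $m\ge2$ and $B\ge1$. There is a family of LP instances (hence SDP instances) with $R,r=O(1)$ in the quantum state input model with normalization bound $B$ such that any quantum algorithm which for every instance of the family outputs an $\varepsilon$-approximation of the optimal value with probability at least $2/3$ must make $\Omega(\sqrt{m}\,B/\varepsilon)$ queries to the input oracles.
   Context: SDP: maximize $\mathrm{Tr}(CX)$ s.t. $\mathrm{Tr}(A_jX)\le b_j$ ($j\in[m]$), $X\succeq0$, with $n\times n$ Hermitian $C,A_j$ of operator norm at most $1$; $R$ bounds the trace of an optimal primal solution, $r$ bounds $\|y\|_1$ of an optimal dual solution. An LP is the case where all matrices are diagonal. Quantum state input model: each $A_j=\mu_j^+\varrho_j^+-\mu_j^-\varrho_j^-+\mu_j^II$ with subnormalized density operators $\varrho_j^\pm$ (psd, trace $\le1$), $\mu_j^\pm\ge0$, $\mu_j^I\in\mathbb{R}$; an oracle $O_\mu$ returns $\mu_j^+,\mu_j^-,\mu_j^I$; an oracle $O_{|\cdot\rangle}|j\rangle|\pm\rangle|0\rangle=|j\rangle|\pm\rangle|\psi_j^\pm\rangle$ prepares purifications of $\varrho_j^\pm$ (pure states on three registers such that tracing out the third and projecting the second onto $|0\rangle$ yields $\varrho_j^\pm$); and $\mu_j^++\mu_j^-+|\mu_j^I|\le B$ for all $j$. Controlled versions and inverses of oracles may be used. *)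

theory Defs
  imports Complex_Main "Jordan_Normal_Form.Matrix"
begin

definition adj :: "complex mat \<Rightarrow> complex mat" where
  "adj A = mat (dim_col A) (dim_row A) (\<lambda>(i,j). cnj (A $$ (j,i)))"

definition mtrace :: "complex mat \<Rightarrow> complex" where
  "mtrace A = (\<Sum>i<dim_row A. A $$ (i,i))"

definition hermitian :: "nat \<Rightarrow> complex mat \<Rightarrow> bool" where
  "hermitian n A \<longleftrightarrow> A \<in> carrier_mat n n \<and> adj A = A"

definition cinner :: "complex vec \<Rightarrow> complex vec \<Rightarrow> complex" where
  "cinner v w = (\<Sum>i<dim_vec v. cnj (v $ i) * w $ i)"

definition vnorm2 :: "complex vec \<Rightarrow> real" where
  "vnorm2 v = (\<Sum>i<dim_vec v. (cmod (v $ i))\<^sup>2)"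

definition psd :: "nat \<Rightarrow> complex mat \<Rightarrow> bool" where
  "psd n A \<longleftrightarrow> hermitian n A \<and>
     (\<forall>v\<in>carrier_vec n. Im (cinner v (A *\<^sub>v v)) = 0 \<and> Re (cinner v (A *\<^sub>v v)) \<ge> 0)"

definition opnorm_le1 :: "nat \<Rightarrow> complex mat \<Rightarrow> bool" where
  "opnorm_le1 n A \<longleftrightarrow> A \<in> carrier_mat n n \<and>
     (\<forall>v\<in>carrier_vec n. vnorm2 (A *\<^sub>v v) \<le> vnorm2 v)"

definition unitary :: "nat \<Rightarrow> complex mat \<Rightarrow> bool" where
  "unitary d U \<longleftrightarrow> U \<in> carrier_mat d d \<and> adj U * U = 1\<^sub>m d \<and> U * adj U = 1\<^sub>m d"

text \<open>Kronecker (tensor) product; the first factor is the most significant index\<close>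
definition kron :: "complex mat \<Rightarrow> complex mat \<Rightarrow> complex mat" where
  "kron A B = mat (dim_row A * dim_row B) (dim_col A * dim_col B)
     (\<lambda>(i,j). A $$ (i div dim_row B, j div dim_col B) * B $$ (i mod dim_row B, j mod dim_col B))"

definition vkron :: "complex vec \<Rightarrow> complex vec \<Rightarrow> complex vec" where
  "vkron v w = vec (dim_vec v * dim_vec w) (\<lambda>i. v $ (i div dim_vec w) * w $ (i mod dim_vec w))"

definition primal_feasible ::
  "nat \<Rightarrow> nat \<Rightarrow> complex mat \<Rightarrow> (nat \<Rightarrow> complex mat) \<Rightarrow> (nat \<Rightarrow> real) \<Rightarrow> complex mat \<Rightarrow> bool" where
  "primal_feasible n m C A b X \<longleftrightarrow> psd n X \<and> (\<forall>j<m. Re (mtrace (A j * X)) \<le> b j)"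

definition primal_obj :: "complex mat \<Rightarrow> complex mat \<Rightarrow> real" where
  "primal_obj C X = Re (mtrace (C * X))"

definition primal_optimal ::
  "nat \<Rightarrow> nat \<Rightarrow> complex mat \<Rightarrow> (nat \<Rightarrow> complex mat) \<Rightarrow> (nat \<Rightarrow> real) \<Rightarrow> complex mat \<Rightarrow> bool" where
  "primal_optimal n m C A b X \<longleftrightarrow> primal_feasible n m C A b X \<and>
     (\<forall>X'. primal_feasible n m C A b X' \<longrightarrow> primal_obj C X' \<le> primal_obj C X)"

definition opt_val ::
  "nat \<Rightarrow> nat \<Rightarrow> complex mat \<Rightarrow> (nat \<Rightarrow> complex mat) \<Rightarrow> (nat \<Rightarrow> real) \<Rightarrow> real" where
  "opt_val n m C A b = Sup (primal_obj C ` {X. primal_feasible n m C A b X})"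

definition dual_feasible ::
  "nat \<Rightarrow> nat \<Rightarrow> complex mat \<Rightarrow> (nat \<Rightarrow> complex mat) \<Rightarrow> (nat \<Rightarrow> real) \<Rightarrow> bool" where
  "dual_feasible n m C A y \<longleftrightarrow> (\<forall>j<m. y j \<ge> 0) \<and>
     psd n (mat n n (\<lambda>(r,c). \<Sum>j<m. complex_of_real (y j) * A j $$ (r,c)) - C)"

definition dual_optimal ::
  "nat \<Rightarrow> nat \<Rightarrow> complex mat \<Rightarrow> (nat \<Rightarrow> complex mat) \<Rightarrow> (nat \<Rightarrow> real) \<Rightarrow> (nat \<Rightarrow> real) \<Rightarrow> bool" where
  "dual_optimal n m C A b y \<longleftrightarrow> dual_feasible n m C A y \<and>
     (\<forall>y'. dual_feasible n m C A y' \<longrightarrow> (\<Sum>j<m. b j * y j) \<le> (\<Sum>j<m. b j * y' j))"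

text \<open>An instance of the input oracles. Sign index s: 0 stands for +, 1 for -.
  The purification psi j s lives on C^n (x) C^a (x) C^e (system, flag, environment).\<close>
record qs_instance =
  psi :: "nat \<Rightarrow> nat \<Rightarrow> complex vec"
  mup :: "nat \<Rightarrow> real"
  mum :: "nat \<Rightarrow> real"
  muI :: "nat \<Rightarrow> real"
  Opsi :: "complex mat"

text \<open>density operator obtained by tracing out the third register and projecting the
  second register onto |0>\<close>
definition rho_of :: "nat \<Rightarrow> nat \<Rightarrow> nat \<Rightarrow> complex vec \<Rightarrow> complex mat" where
  "rho_of n a e v = mat n n (\<lambda>(i,k).
     (\<Sum>t<e. v $ ((i * a + 0) * e + t) * cnj (v $ ((k * a + 0) * e + t))))"

definition A_of :: "nat \<Rightarrow> nat \<Rightarrow> nat \<Rightarrow> qs_instance \<Rightarrow> nat \<Rightarrow> complex mat" where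
  "A_of n a e I j =
     complex_of_real (mup I j) \<cdot>\<^sub>m rho_of n a e (psi I j 0)
   - complex_of_real (mum I j) \<cdot>\<^sub>m rho_of n a e (psi I j 1)
   + complex_of_real (muI I j) \<cdot>\<^sub>m 1\<^sub>m n"

text \<open>O_mu: classical oracle |j>|z> -> |j>|z + enc(mu_j) mod L> on C^m (x) C^L\<close>
definition Omu :: "nat \<Rightarrow> nat \<Rightarrow> (real \<times> real \<times> real \<Rightarrow> nat) \<Rightarrow> qs_instance \<Rightarrow> complex mat" where
  "Omu m L enc I = mat (m * L) (m * L) (\<lambda>(r,c).
     if r div L = c div L \<and>
        r mod L = (c mod L + enc (mup I (c div L), mum I (c div L), muI I (c div L))) mod L
     then 1 else 0)"

definition valid_instance :: "nat \<Rightarrow> nat \<Rightarrow> nat \<Rightarrow> nat \<Rightarrow> real \<Rightarrow> qs_instance \<Rightarrow> bool" where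
  "valid_instance m n a e B I \<longleftrightarrow>
     (\<forall>j<m. \<forall>s<2. psi I j s \<in> carrier_vec (n * a * e) \<and> vnorm2 (psi I j s) = 1) \<and>
     (\<forall>j<m. mup I j \<ge> 0 \<and> mum I j \<ge> 0 \<and> mup I j + mum I j + \<bar>muI I j\<bar> \<le> B) \<and>
     unitary (m * 2 * (n * a * e)) (Opsi I) \<and>
     (\<forall>j<m. \<forall>s<2. Opsi I *\<^sub>v unit_vec (m * 2 * (n * a * e)) ((j * 2 + s) * (n * a * e))
          = vkron (vkron (unit_vec m j) (unit_vec 2 s)) (psi I j s))"

text \<open>Query kinds: which oracle (False = O_mu, True = O_psi), inverse?, controlled?\<close>
type_synonym qkind = "bool \<times> bool \<times> bool"

text \<open>Work space: C^2 (control) (x) C^(dmu) (x) C^(dpsi) (x) C^k (workspace).\<close>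
definition embed_query :: "nat \<Rightarrow> complex mat \<Rightarrow> complex mat \<Rightarrow> qkind \<Rightarrow> complex mat" where
  "embed_query k Om Op q = (case q of (which, isinv, ctrl) \<Rightarrow>
     let dm = dim_row Om; dp = dim_row Op;
         O0 = (if which then Op else Om);
         O1 = (if isinv then adj O0 else O0);
         E = (if which then kron (1\<^sub>m dm) (kron O1 (1\<^sub>m k)) else kron O1 (1\<^sub>m (dp * k)));
         P0 = mat 2 2 (\<lambda>(i,j). if i = 0 \<and> j = 0 then 1 else 0);
         P1 = mat 2 2 (\<lambda>(i,j). if i = 1 \<and> j = 1 then 1 else 0)
     in if ctrl then kron P0 (1\<^sub>m (dm * dp * k)) + kron P1 E else kron (1\<^sub>m 2) E)"

fun alg_state :: "nat \<Rightarrow> nat \<Rightarrow> (nat \<Rightarrow> complex mat) \<Rightarrow> (nat \<Rightarrow> qkind)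
                   \<Rightarrow> complex mat \<Rightarrow> complex mat \<Rightarrow> nat \<Rightarrow> complex vec" where
  "alg_state D k U q Om Op 0 = U 0 *\<^sub>v unit_vec D 0"
| "alg_state D k U q Om Op (Suc t) =
     U (Suc t) *\<^sub>v (embed_query k Om Op (q (Suc t)) *\<^sub>v alg_state D k U q Om Op t)"

definition success_prob :: "nat \<Rightarrow> nat \<Rightarrow> (nat \<Rightarrow> complex mat) \<Rightarrow> (nat \<Rightarrow> qkind)
     \<Rightarrow> (nat \<Rightarrow> real) \<Rightarrow> nat \<Rightarrow> complex mat \<Rightarrow> complex mat \<Rightarrow> real \<Rightarrow> real \<Rightarrow> real" where
  "success_prob D k U q out T Om Op target eps =
     (\<Sum>i\<in>{i. i < D \<and> \<bar>out i - target\<bar> \<le> eps}. (cmod (alg_state D k U q Om Op T $ i))\<^sup>2)"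

end

theory Submission
  imports Defs "HOL-Analysis.L2_Norm"
begin

text \<open>The hard instances are one-variable LPs  max x  s.t.  alpha_j x <= 1  (j < m), with
  alpha_j = 1/4 for all j in the base instance and alpha_z = 1/4 + eps/2 in instance z; the optimal
  values 4 and 4/(1 + 2 eps) are more than 2 eps apart, so an eps-approximation algorithm must
  distinguish the base instance from each of the m perturbed ones with constant bias.
  Encoding alpha_j = (B/2) (rho_j^+ - rho_j^-) with qubit states, the perturbation moves the
  amplitude of psi_z^+ by only O(eps/B), so the state-preparation oracles differ by O(eps/B) and only
  on the block of constraint z. By the hybrid argument the final states of a T-query algorithm on
  instance z and on the base instance are at distance at most the sum over the queries of
  || (O_z - O_base) phi_t ||; summing over z and applying Cauchy-Schwarz to the disjoint blocks
  gives m/5 <= T O(eps/B) sqrt m, that is T = Omega(sqrt m B / eps).\<close>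

definition vnorm :: "complex vec \<Rightarrow> real" where
  "vnorm v = sqrt (vnorm2 v)"

definition vnorm2_on :: "nat set \<Rightarrow> complex vec \<Rightarrow> real" where
  "vnorm2_on S v = (\<Sum>i\<in>{i. i < dim_vec v \<and> i \<in> S}. (cmod (v $ i))\<^sup>2)"

lemma vnorm2_nonneg: "vnorm2 v \<ge> 0"
  unfolding vnorm2_def by (auto intro: sum_nonneg)

lemma vnorm2_on_nonneg: "vnorm2_on S v \<ge> 0"
  unfolding vnorm2_on_def by (auto intro: sum_nonneg)

lemma vnorm2_on_eq_sum_if:
  "vnorm2_on S v = (\<Sum>i<dim_vec v. if i \<in> S then (cmod (v $ i))\<^sup>2 else 0)"
  unfolding vnorm2_on_def by (rule sum.mono_neutral_cong_left) auto

lemma vnorm2_on_UNIV: "vnorm2_on UNIV v = vnorm2 v"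
  unfolding vnorm2_on_def vnorm2_def by (rule sum.cong) auto

lemma vnorm2_on_mono: "S \<subseteq> T \<Longrightarrow> vnorm2_on S v \<le> vnorm2_on T v"
  unfolding vnorm2_on_def by (rule sum_mono2) auto

lemma vnorm2_on_le_vnorm2: "vnorm2_on S v \<le> vnorm2 v"
  using vnorm2_on_mono[of S UNIV v] by (simp add: vnorm2_on_UNIV)

lemma vnorm2_on_disjoint_le:
  assumes "A \<inter> B = {}"
  shows "vnorm2_on A v + vnorm2_on B v \<le> vnorm2 v"
proof -
  have "vnorm2_on A v + vnorm2_on B v = (\<Sum>i<dim_vec v.
      (if i \<in> A then (cmod (v $ i))\<^sup>2 else 0) + (if i \<in> B then (cmod (v $ i))\<^sup>2 else 0))"
    unfolding vnorm2_on_eq_sum_if by (simp add: sum.distrib)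
  also have "\<dots> \<le> (\<Sum>i<dim_vec v. (cmod (v $ i))\<^sup>2)"
    using assms by (intro sum_mono) auto
  finally show ?thesis by (simp add: vnorm2_def)
qed

lemma sum_vnorm2_on_fibres_le: "(\<Sum>j<(m::nat). vnorm2_on {i. g i = j} v) \<le> vnorm2 v"
proof -
  have "(\<Sum>j<m. vnorm2_on {i. g i = j} v)
      = (\<Sum>i<dim_vec v. \<Sum>j<m. if g i = j then (cmod (v $ i))\<^sup>2 else 0)"
    unfolding vnorm2_on_eq_sum_if by (subst sum.swap) simp
  also have "\<dots> = (\<Sum>i<dim_vec v. if g i < m then (cmod (v $ i))\<^sup>2 else 0)"
    by (intro sum.cong refl) (subst sum.delta'; auto)
  also have "\<dots> \<le> (\<Sum>i<dim_vec v. (cmod (v $ i))\<^sup>2)"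
    by (intro sum_mono) auto
  finally show ?thesis by (simp add: vnorm2_def)
qed

lemma sqrt_vnorm2_on_eq_L2_set:
  "sqrt (vnorm2_on S v) = L2_set (\<lambda>i. cmod (v $ i)) {i. i < dim_vec v \<and> i \<in> S}"
  unfolding vnorm2_on_def L2_set_def by simp

lemma sqrt_vnorm2_on_add_le:
  assumes "dim_vec w = dim_vec v"
  shows "sqrt (vnorm2_on S (v + w)) \<le> sqrt (vnorm2_on S v) + sqrt (vnorm2_on S w)"
proof -
  have "sqrt (vnorm2_on S (v + w)) = L2_set (\<lambda>i. cmod (v $ i + w $ i)) {i. i < dim_vec v \<and> i \<in> S}"
    unfolding sqrt_vnorm2_on_eq_L2_set using assms by (intro L2_set_cong) auto
  also have "\<dots> \<le> L2_set (\<lambda>i. cmod (v $ i) + cmod (w $ i)) {i. i < dim_vec v \<and> i \<in> S}"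
    by (rule L2_set_mono) (auto intro: norm_triangle_ineq)
  also have "\<dots> \<le> sqrt (vnorm2_on S v) + sqrt (vnorm2_on S w)"
    unfolding sqrt_vnorm2_on_eq_L2_set using assms by (simp add: L2_set_triangle_ineq)
  finally show ?thesis .
qed

lemma vnorm_add_le: "dim_vec w = dim_vec v \<Longrightarrow> vnorm (v + w) \<le> vnorm v + vnorm w"
  using sqrt_vnorm2_on_add_le[of w v UNIV] by (simp add: vnorm_def vnorm2_on_UNIV)

lemma vnorm_minus_commute: "dim_vec a = dim_vec b \<Longrightarrow> vnorm (a - b) = vnorm (b - a)"
  unfolding vnorm_def vnorm2_def
  by (auto intro!: arg_cong[where f=sqrt] sum.cong simp: norm_minus_commute)

lemma sum_sqrt_le_sqrt_mult_sum:
  assumes "\<And>j. j < m \<Longrightarrow> x j \<ge> 0"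
  shows "(\<Sum>j<m. sqrt (x j)) \<le> sqrt (real m) * sqrt (\<Sum>j<m. x j)"
proof -
  have "(\<Sum>j<m. sqrt (x j)) = (\<Sum>j<m. \<bar>1\<bar> * \<bar>sqrt (x j)\<bar>)"
    using assms by (intro sum.cong) auto
  also have "\<dots> \<le> L2_set (\<lambda>_. 1::real) {..<m} * L2_set (\<lambda>j. sqrt (x j)) {..<m}"
    by (rule L2_set_mult_ineq)
  also have "L2_set (\<lambda>j. sqrt (x j)) {..<m} = sqrt (\<Sum>j<m. x j)"
    unfolding L2_set_def using assms by (intro arg_cong[where f=sqrt] sum.cong) auto
  finally show ?thesis by (simp add: L2_set_constant)
qed

lemma mult_mat_vec_nth_sum:
  "A \<in> carrier_mat nr nc \<Longrightarrow> v \<in> carrier_vec nc \<Longrightarrow> i < nr \<Longrightarrow>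
   (A *\<^sub>v v) $ i = (\<Sum>c<nc. A $$ (i,c) * v $ c)"
  by (auto simp: scalar_prod_def row_def atLeast0LessThan intro!: sum.cong)

lemma mult_mat_unit_vec:
  fixes A :: "complex mat"
  assumes A: "A \<in> carrier_mat n n" and c: "c < n"
  shows "A *\<^sub>v unit_vec n c = vec n (\<lambda>r. A $$ (r,c))"
proof (rule eq_vecI)
  fix r assume "r < dim_vec (vec n (\<lambda>r. A $$ (r, c)))"
  then have r: "r < n" by simp
  have "(A *\<^sub>v unit_vec n c) $ r = (\<Sum>l<n. A $$ (r,l) * unit_vec n c $ l)"
    using r by (intro mult_mat_vec_nth_sum[OF A]) auto
  also have "\<dots> = (\<Sum>l<n. if l = c then A $$ (r,c) else 0)"
    using c by (intro sum.cong) (auto simp: unit_vec_def)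
  also have "\<dots> = A $$ (r,c)" using c by (simp add: sum.delta)
  finally show "(A *\<^sub>v unit_vec n c) $ r = vec n (\<lambda>r. A $$ (r, c)) $ r" using r by simp
qed (use A in auto)

lemma cinner_self: "cinner v v = complex_of_real (vnorm2 v)"
proof -
  have "cnj z * z = complex_of_real ((cmod z)\<^sup>2)" for z :: complex
    using complex_norm_square[of z] by (simp add: mult.commute)
  then show ?thesis unfolding vnorm2_def cinner_def by simp
qed

lemma cinner_mult_mat_vec_left:
  assumes A: "A \<in> carrier_mat d d" and v: "v \<in> carrier_vec d" and w: "w \<in> carrier_vec d"
  shows "cinner (A *\<^sub>v v) w = cinner v (adj A *\<^sub>v w)"
proof -
  have adjA: "adj A \<in> carrier_mat d d" using A by (auto simp: adj_def)
  have "cinner (A *\<^sub>v v) w = (\<Sum>i<d. cnj (\<Sum>c<d. A $$ (i,c) * v $ c) * w $ i)"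
    unfolding cinner_def using A v
    by (auto intro!: sum.cong simp: mult_mat_vec_nth_sum[OF A v] simp del: index_mult_mat_vec)
  also have "\<dots> = (\<Sum>i<d. \<Sum>c<d. cnj (v $ c) * (cnj (A $$ (i,c)) * w $ i))"
    by (simp add: sum_distrib_right sum_distrib_left mult_ac)
  also have "\<dots> = (\<Sum>c<d. \<Sum>i<d. cnj (v $ c) * (cnj (A $$ (i,c)) * w $ i))"
    by (rule sum.swap)
  also have "\<dots> = (\<Sum>c<d. cnj (v $ c) * (adj A *\<^sub>v w) $ c)"
    using A adjA by (intro sum.cong refl)
      (subst mult_mat_vec_nth_sum[OF adjA w]; simp add: sum_distrib_left adj_def)
  also have "\<dots> = cinner v (adj A *\<^sub>v w)"
    unfolding cinner_def using v by simp
  finally show ?thesis .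
qed

lemma unitary_vnorm2:
  assumes U: "unitary d U" and v: "v \<in> carrier_vec d"
  shows "vnorm2 (U *\<^sub>v v) = vnorm2 v"
proof -
  have UC: "U \<in> carrier_mat d d" and UU: "adj U * U = 1\<^sub>m d"
    using U unfolding unitary_def by auto
  have "cinner (U *\<^sub>v v) (U *\<^sub>v v) = cinner v (adj U *\<^sub>v (U *\<^sub>v v))"
    using UC v by (intro cinner_mult_mat_vec_left) auto
  also have "adj U *\<^sub>v (U *\<^sub>v v) = v"
    using UC UU v by (subst assoc_mult_mat_vec[symmetric]) (auto simp: adj_def)
  finally show ?thesis by (simp add: cinner_self)
qed

lemma vnorm_unitary: "unitary d U \<Longrightarrow> v \<in> carrier_vec d \<Longrightarrow> vnorm (U *\<^sub>v v) = vnorm v"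
  unfolding vnorm_def by (simp add: unitary_vnorm2)

lemma adj_adj: "adj (adj A) = A"
  unfolding adj_def by (intro eq_matI) auto

lemma unitary_adj: "unitary d U \<Longrightarrow> unitary d (adj U)"
  unfolding unitary_def by (auto simp: adj_adj) (auto simp: adj_def)

lemma unitary_one: "unitary n (1\<^sub>m n)"
  unfolding unitary_def adj_def by (auto intro!: eq_matI)


lemma mult_add_less_mult: "i1 < a \<Longrightarrow> i2 < b \<Longrightarrow> i1*b+i2 < a*(b::nat)"
proof -
  assume "i1 < a" "i2 < b"
  then have "i1*b+i2 < Suc i1 * b" by simp
  also have "\<dots> \<le> a*b" using \<open>i1 < a\<close> by (intro mult_le_mono1) simp
  finally show ?thesis .
qed

lemma div_mod_less_of_less_mult: "i < a*b \<Longrightarrow> i div b < a \<and> i mod b < (b::nat)"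
  by (cases "b = 0") (auto simp: less_mult_imp_div_less)

lemma sum_lessThan_mult:
  fixes f :: "nat \<Rightarrow> 'a::comm_monoid_add"
  shows "(\<Sum>i<a*b. f i) = (\<Sum>i1<a. \<Sum>i2<b. f (i1*b+i2))"
proof -
  have shift: "sum f {i1*b..<i1*b+b} = (\<Sum>i2<b. f (i1*b+i2))" for i1
    using sum.atLeastLessThan_shift_0[of f "i1*b" "i1*b+b"] by (simp add: atLeast0LessThan comp_def)
  have "(\<Sum>i<a*b. f i) = (\<Sum>i1<a. sum f {i1*b..<i1*b+b})"
    by (rule sum.nat_group[symmetric])
  then show ?thesis by (simp add: shift)
qed

lemma sum_lessThan_2: "(\<Sum>c<2::nat. f c) = f 0 + f 1"
  by (simp add: numeral_2_eq_2)

definition block_vec :: "nat \<Rightarrow> complex vec \<Rightarrow> nat \<Rightarrow> complex vec" where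
  "block_vec b v c = vec b (\<lambda>i. v $ (c*b+i))"

lemma block_vec_carrier [simp]: "block_vec b v c \<in> carrier_vec b" "dim_vec (block_vec b v c) = b"
  unfolding block_vec_def by auto

lemma block_vec_nth [simp]: "i < b \<Longrightarrow> block_vec b v c $ i = v $ (c*b+i)"
  unfolding block_vec_def by auto

lemma vnorm2_split_blocks:
  "dim_vec w = a*b \<Longrightarrow> vnorm2 w = (\<Sum>i1<a. \<Sum>i2<b. (cmod (w $ (i1*b+i2)))\<^sup>2)"
  unfolding vnorm2_def by (simp add: sum_lessThan_mult)

lemma vnorm2_on_split_blocks:
  "dim_vec w = a*b \<Longrightarrow> vnorm2_on {i. i div b \<in> S \<and> i mod b \<in> T} w =
   (\<Sum>i1<a. if i1 \<in> S then vnorm2_on T (block_vec b w i1) else 0)"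
  unfolding vnorm2_on_eq_sum_if by (auto simp: sum_lessThan_mult intro!: sum.cong sum.neutral)

lemma kron_carrier: "A \<in> carrier_mat a a \<Longrightarrow> B \<in> carrier_mat b b \<Longrightarrow> kron A B \<in> carrier_mat (a*b) (a*b)"
  unfolding kron_def by auto

lemma kron_index:
  assumes "A \<in> carrier_mat a a" "B \<in> carrier_mat b b" "i1 < a" "i2 < b" "c1 < a" "c2 < b"
  shows "kron A B $$ (i1*b+i2, c1*b+c2) = A $$ (i1,c1) * B $$ (i2,c2)"
  using assms mult_add_less_mult[of i1 a i2 b] mult_add_less_mult[of c1 a c2 b]
  unfolding kron_def by simp

lemma kron_mult_vec_nth:
  assumes A: "A \<in> carrier_mat a a" and B: "B \<in> carrier_mat b b" and v: "v \<in> carrier_vec (a*b)"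
    and i: "i1 < a" "i2 < b"
  shows "(kron A B *\<^sub>v v) $ (i1*b+i2) = (\<Sum>c1<a. A $$ (i1,c1) * (B *\<^sub>v block_vec b v c1) $ i2)"
proof -
  have "(kron A B *\<^sub>v v) $ (i1*b+i2) = (\<Sum>c<a*b. kron A B $$ (i1*b+i2, c) * v $ c)"
    by (rule mult_mat_vec_nth_sum[OF kron_carrier[OF A B] v mult_add_less_mult[OF i]])
  also have "\<dots> = (\<Sum>c1<a. \<Sum>c2<b. A $$ (i1,c1) * (B $$ (i2,c2) * v $ (c1*b+c2)))"
    using A B i by (simp add: sum_lessThan_mult kron_index mult.assoc)
  also have "\<dots> = (\<Sum>c1<a. A $$ (i1,c1) * (B *\<^sub>v block_vec b v c1) $ i2)"
    using B i by (intro sum.cong refl)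
      (simp add: mult_mat_vec_nth_sum[OF B block_vec_carrier(1) i(2)] sum_distrib_left
        del: index_mult_mat_vec)
  finally show ?thesis .
qed

lemma kron_minus_right:
  "A \<in> carrier_mat a a \<Longrightarrow> B \<in> carrier_mat b b \<Longrightarrow> B' \<in> carrier_mat b b \<Longrightarrow>
   kron A B - kron A B' = kron A (B - B')"
  unfolding kron_def by (intro eq_matI) (auto simp: algebra_simps dest!: div_mod_less_of_less_mult)

lemma kron_minus_left:
  "A \<in> carrier_mat a a \<Longrightarrow> A' \<in> carrier_mat a a \<Longrightarrow> B \<in> carrier_mat b b \<Longrightarrow>
   kron A B - kron A' B = kron (A - A') B"
  unfolding kron_def by (intro eq_matI) (auto simp: algebra_simps dest!: div_mod_less_of_less_mult)

text \<open>Only the block of the perturbed constraint is seen by the difference of two oracles; this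
  locality is what makes the hybrid bound grow like sqrt m instead of m.\<close>
definition norm_bounded_on :: "nat \<Rightarrow> complex mat \<Rightarrow> real \<Rightarrow> nat set \<Rightarrow> bool" where
  "norm_bounded_on d M \<alpha> S \<longleftrightarrow> M \<in> carrier_mat d d \<and> \<alpha> \<ge> 0 \<and>
     (\<forall>v\<in>carrier_vec d. vnorm2 (M *\<^sub>v v) \<le> \<alpha>\<^sup>2 * vnorm2_on S v)"

lemma norm_bounded_onD:
  "norm_bounded_on d M \<alpha> S \<Longrightarrow> v \<in> carrier_vec d \<Longrightarrow> vnorm (M *\<^sub>v v) \<le> \<alpha> * sqrt (vnorm2_on S v)"
  unfolding norm_bounded_on_def vnorm_def
  by (metis real_sqrt_le_mono real_sqrt_mult real_sqrt_abs abs_of_nonneg)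

lemma norm_bounded_on_1_UNIV_vnorm:
  "norm_bounded_on d M 1 UNIV \<Longrightarrow> v \<in> carrier_vec d \<Longrightarrow> vnorm (M *\<^sub>v v) \<le> vnorm v"
  using norm_bounded_onD[of d M 1 UNIV v] by (simp add: vnorm2_on_UNIV vnorm_def)

lemma norm_bounded_on_mono:
  "norm_bounded_on n M \<alpha> S \<Longrightarrow> S \<subseteq> S' \<Longrightarrow> norm_bounded_on n M \<alpha> S'"
  unfolding norm_bounded_on_def using vnorm2_on_mono
  by (meson order_trans mult_left_mono zero_le_power2)

lemma norm_bounded_on_cong:
  "norm_bounded_on n M \<alpha> S \<Longrightarrow> n = n' \<Longrightarrow> S = S' \<Longrightarrow> \<alpha> = \<alpha>' \<Longrightarrow> norm_bounded_on n' M \<alpha>' S'"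
  by simp

lemma unitary_norm_bounded_on: "unitary d U \<Longrightarrow> norm_bounded_on d U 1 UNIV"
  unfolding norm_bounded_on_def by (auto simp: unitary_vnorm2 vnorm2_on_UNIV unitary_def)

lemma norm_bounded_on_zero: "\<delta> \<ge> 0 \<Longrightarrow> norm_bounded_on n (0\<^sub>m n n) \<delta> S"
  unfolding norm_bounded_on_def by (auto simp: vnorm2_def vnorm2_on_nonneg)

lemma norm_bounded_on_kron:
  assumes A: "norm_bounded_on a A \<alpha> S" and B: "norm_bounded_on b B \<beta> T"
  shows "norm_bounded_on (a*b) (kron A B) (\<alpha>*\<beta>) {i. i div b \<in> S \<and> i mod b \<in> T}"
proof -
  have AC: "A \<in> carrier_mat a a" and al: "\<alpha> \<ge> 0"
    and Ab: "\<And>v. v \<in> carrier_vec a \<Longrightarrow> vnorm2 (A *\<^sub>v v) \<le> \<alpha>\<^sup>2 * vnorm2_on S v"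
    using A unfolding norm_bounded_on_def by auto
  have BC: "B \<in> carrier_mat b b" and be: "\<beta> \<ge> 0"
    and Bb: "\<And>v. v \<in> carrier_vec b \<Longrightarrow> vnorm2 (B *\<^sub>v v) \<le> \<beta>\<^sup>2 * vnorm2_on T v"
    using B unfolding norm_bounded_on_def by auto
  have K: "kron A B \<in> carrier_mat (a*b) (a*b)" by (rule kron_carrier[OF AC BC])
  show ?thesis unfolding norm_bounded_on_def
  proof (intro conjI ballI K)
    show "\<alpha>*\<beta> \<ge> 0" using al be by simp
    fix v :: "complex vec" assume v: "v \<in> carrier_vec (a*b)"
    \<comment> \<open>read as an a x b array, the image has column i2 equal to A applied to z i2\<close>
    define z where "z i2 = vec a (\<lambda>c1. (B *\<^sub>v block_vec b v c1) $ i2)" for i2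
    have zc: "z i2 \<in> carrier_vec a" for i2 unfolding z_def by simp
    have wz: "(kron A B *\<^sub>v v) $ (i1*b+i2) = (A *\<^sub>v z i2) $ i1" if "i1 < a" "i2 < b" for i1 i2
    proof -
      have "(A *\<^sub>v z i2) $ i1 = (\<Sum>c1<a. A $$ (i1,c1) * z i2 $ c1)"
        by (rule mult_mat_vec_nth_sum[OF AC zc that(1)])
      then show ?thesis using that by (simp add: kron_mult_vec_nth[OF AC BC v] z_def)
    qed
    have "vnorm2 (kron A B *\<^sub>v v) = (\<Sum>i2<b. \<Sum>i1<a. (cmod ((A *\<^sub>v z i2) $ i1))\<^sup>2)"
      using K by (subst vnorm2_split_blocks[of _ a b]) (simp, subst sum.swap, simp add: wz)
    also have "\<dots> = (\<Sum>i2<b. vnorm2 (A *\<^sub>v z i2))"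
      using AC by (intro sum.cong refl) (simp add: vnorm2_def)
    also have "\<dots> \<le> (\<Sum>i2<b. \<alpha>\<^sup>2 * vnorm2_on S (z i2))"
      by (intro sum_mono Ab zc)
    also have "\<dots> = \<alpha>\<^sup>2 * (\<Sum>i2<b. \<Sum>c1<a.
        if c1 \<in> S then (cmod ((B *\<^sub>v block_vec b v c1) $ i2))\<^sup>2 else 0)"
      by (auto simp: vnorm2_on_eq_sum_if sum_distrib_left z_def intro!: sum.cong)
    also have "\<dots> = \<alpha>\<^sup>2 * (\<Sum>c1<a. if c1 \<in> S then vnorm2 (B *\<^sub>v block_vec b v c1) else 0)"
      using BC by (subst sum.swap) (auto intro!: sum.cong simp: vnorm2_def)
    also have "\<dots> \<le> \<alpha>\<^sup>2 * (\<Sum>c1<a. if c1 \<in> S then \<beta>\<^sup>2 * vnorm2_on T (block_vec b v c1) else 0)"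
      by (intro mult_left_mono sum_mono) (auto intro: Bb)
    also have "\<dots> = (\<alpha>*\<beta>)\<^sup>2 * vnorm2_on {i. i div b \<in> S \<and> i mod b \<in> T} v"
      using v by (subst vnorm2_on_split_blocks[of v a b])
        (auto simp: sum_distrib_left power_mult_distrib mult_ac intro!: sum.cong)
    finally show "vnorm2 (kron A B *\<^sub>v v) \<le> (\<alpha>*\<beta>)\<^sup>2 * vnorm2_on {i. i div b \<in> S \<and> i mod b \<in> T} v" .
  qed
qed

definition ctrl_proj :: "nat \<Rightarrow> complex mat" where
  "ctrl_proj b = mat 2 2 (\<lambda>(i,j). if i = b \<and> j = b then 1 else 0)"

definition controlled_mat :: "complex mat \<Rightarrow> complex mat \<Rightarrow> complex mat" where
  "controlled_mat X Y = kron (ctrl_proj 0) X + kron (ctrl_proj 1) Y"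

lemma ctrl_proj_carrier [simp]: "ctrl_proj b \<in> carrier_mat 2 2"
  unfolding ctrl_proj_def by auto

lemma controlled_mat_carrier:
  "X \<in> carrier_mat N N \<Longrightarrow> Y \<in> carrier_mat N N \<Longrightarrow> controlled_mat X Y \<in> carrier_mat (2*N) (2*N)"
  unfolding controlled_mat_def by (intro add_carrier_mat kron_carrier) auto

lemma controlled_mat_blocks:
  assumes X: "X \<in> carrier_mat N N" and Y: "Y \<in> carrier_mat N N" and v: "v \<in> carrier_vec (2*N)"
  shows "block_vec N (controlled_mat X Y *\<^sub>v v) 0 = X *\<^sub>v block_vec N v 0"
    and "block_vec N (controlled_mat X Y *\<^sub>v v) 1 = Y *\<^sub>v block_vec N v 1"
proof -
  have K0: "kron (ctrl_proj 0) X \<in> carrier_mat (2*N) (2*N)"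
    and K1: "kron (ctrl_proj 1) Y \<in> carrier_mat (2*N) (2*N)"
    using X Y by (auto intro: kron_carrier)
  have e: "(controlled_mat X Y *\<^sub>v v) $ (i1*N+i2) =
      (X *\<^sub>v block_vec N v i1) $ i2 * (if i1 = 0 then 1 else 0)
      + (Y *\<^sub>v block_vec N v i1) $ i2 * (if i1 = 1 then 1 else 0)"
    if "i1 < 2" "i2 < N" for i1 i2
  proof -
    have "(controlled_mat X Y *\<^sub>v v) $ (i1*N+i2)
        = (kron (ctrl_proj 0) X *\<^sub>v v) $ (i1*N+i2) + (kron (ctrl_proj 1) Y *\<^sub>v v) $ (i1*N+i2)"
      unfolding controlled_mat_def using K0 K1 v mult_add_less_mult[OF that]
      by (simp add: add_mult_distrib_mat_vec)
    also have "\<dots> = (\<Sum>c1<2. ctrl_proj 0 $$ (i1,c1) * (X *\<^sub>v block_vec N v c1) $ i2)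
        + (\<Sum>c1<2. ctrl_proj 1 $$ (i1,c1) * (Y *\<^sub>v block_vec N v c1) $ i2)"
      using kron_mult_vec_nth[OF _ X v that] kron_mult_vec_nth[OF _ Y v that] by simp
    finally show ?thesis
      using that by (simp add: sum_lessThan_2 ctrl_proj_def less_2_cases_iff)
  qed
  show "block_vec N (controlled_mat X Y *\<^sub>v v) 0 = X *\<^sub>v block_vec N v 0"
    using X by (intro eq_vecI) (auto simp: e[of 0, simplified])
  show "block_vec N (controlled_mat X Y *\<^sub>v v) 1 = Y *\<^sub>v block_vec N v 1"
    using Y e[of 1] by (intro eq_vecI) auto
qed

lemma vnorm2_two_blocks:
  "dim_vec w = 2*N \<Longrightarrow> vnorm2 w = vnorm2 (block_vec N w 0) + vnorm2 (block_vec N w 1)"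
  by (simp add: vnorm2_split_blocks[of w 2 N] sum_lessThan_2) (simp add: vnorm2_def)

lemma norm_bounded_on_controlled:
  assumes X: "norm_bounded_on N X \<alpha> S" and Y: "norm_bounded_on N Y \<alpha> S"
  shows "norm_bounded_on (2*N) (controlled_mat X Y) \<alpha> {i. i mod N \<in> S}"
proof -
  have XC: "X \<in> carrier_mat N N" and YC: "Y \<in> carrier_mat N N" and al: "\<alpha> \<ge> 0"
    using X Y unfolding norm_bounded_on_def by auto
  have K: "controlled_mat X Y \<in> carrier_mat (2*N) (2*N)"
    by (rule controlled_mat_carrier[OF XC YC])
  show ?thesis unfolding norm_bounded_on_def
  proof (intro conjI ballI K al)
    fix v :: "complex vec" assume v: "v \<in> carrier_vec (2*N)"
    have "vnorm2 (controlled_mat X Y *\<^sub>v v)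
        = vnorm2 (X *\<^sub>v block_vec N v 0) + vnorm2 (Y *\<^sub>v block_vec N v 1)"
      using K controlled_mat_blocks[OF XC YC v]
      by (subst vnorm2_two_blocks[of _ N]) (auto simp: One_nat_def)
    also have "\<dots> \<le> \<alpha>\<^sup>2 * vnorm2_on S (block_vec N v 0) + \<alpha>\<^sup>2 * vnorm2_on S (block_vec N v 1)"
      using X Y unfolding norm_bounded_on_def by (intro add_mono) auto
    also have "\<dots> = \<alpha>\<^sup>2 * vnorm2_on {i. i mod N \<in> S} v"
      using v vnorm2_on_split_blocks[of v 2 N UNIV S] by (simp add: sum_lessThan_2 distrib_left)
    finally show "vnorm2 (controlled_mat X Y *\<^sub>v v) \<le> \<alpha>\<^sup>2 * vnorm2_on {i. i mod N \<in> S} v" .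
  qed
qed

lemma controlled_mat_minus:
  assumes "X \<in> carrier_mat N N" "Y \<in> carrier_mat N N" "X' \<in> carrier_mat N N" "Y' \<in> carrier_mat N N"
  shows "controlled_mat X' Y' - controlled_mat X Y = controlled_mat (X' - X) (Y' - Y)"
proof -
  have K: "kron (ctrl_proj b) Z \<in> carrier_mat (2*N) (2*N)" if "Z \<in> carrier_mat N N" for b Z
    using that by (auto intro: kron_carrier)
  have add_minus: "(A' + B') - (A + B) = (A' - A) + (B' - B)"
    if "A \<in> carrier_mat n n" "B \<in> carrier_mat n n" "A' \<in> carrier_mat n n" "B' \<in> carrier_mat n n"
    for A B A' B' :: "complex mat" and n
    using that by (intro eq_matI) auto
  have "controlled_mat X' Y' - controlled_mat X Y
      = (kron (ctrl_proj 0) X' - kron (ctrl_proj 0) X) + (kron (ctrl_proj 1) Y' - kron (ctrl_proj 1) Y)"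
    unfolding controlled_mat_def using K assms by (intro add_minus)
  then show ?thesis
    using assms by (simp add: controlled_mat_def kron_minus_right[OF ctrl_proj_carrier])
qed

lemma kron_one_2_eq_controlled: "E \<in> carrier_mat n n \<Longrightarrow> kron (1\<^sub>m 2) E = controlled_mat E E"
  unfolding kron_def controlled_mat_def ctrl_proj_def
  by (intro eq_matI) (auto dest!: div_mod_less_of_less_mult simp: less_2_cases_iff)

definition query_action :: "nat \<Rightarrow> complex mat \<Rightarrow> complex mat \<Rightarrow> bool \<Rightarrow> bool \<Rightarrow> complex mat" where
  "query_action k Om Op w iv = (let O0 = (if w then Op else Om); O1 = (if iv then adj O0 else O0)
     in if w then kron (1\<^sub>m (dim_row Om)) (kron O1 (1\<^sub>m k)) else kron O1 (1\<^sub>m (dim_row Op * k)))"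

lemma query_action_carrier:
  "Om \<in> carrier_mat dm dm \<Longrightarrow> Op \<in> carrier_mat dp dp \<Longrightarrow>
   query_action k Om Op w iv \<in> carrier_mat (dm*dp*k) (dm*dp*k)"
  unfolding query_action_def Let_def by (auto simp: adj_def kron_def mult_ac)

lemma embed_query_eq_controlled:
  assumes "Om \<in> carrier_mat dm dm" "Op \<in> carrier_mat dp dp"
  shows "embed_query k Om Op (w,iv,c) =
     controlled_mat (if c then 1\<^sub>m (dm*dp*k) else query_action k Om Op w iv) (query_action k Om Op w iv)"
  using assms kron_one_2_eq_controlled[OF query_action_carrier[OF assms]]
  unfolding embed_query_def query_action_def Let_def controlled_mat_def ctrl_proj_def
  by (cases c) auto

lemma query_action_norm_bounded:
  assumes U: "unitary dm Om" "unitary dp Op"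
  shows "norm_bounded_on (dm*dp*k) (query_action k Om Op w iv) 1 UNIV"
proof -
  have O1: "norm_bounded_on dm (if iv then adj Om else Om) 1 UNIV"
    "norm_bounded_on dp (if iv then adj Op else Op) 1 UNIV"
    using U by (auto intro!: unitary_norm_bounded_on unitary_adj)
  have I: "norm_bounded_on n (1\<^sub>m n) 1 UNIV" for n
    by (rule unitary_norm_bounded_on[OF unitary_one])
  have dims: "dim_row Om = dm" "dim_row Op = dp" using U unfolding unitary_def by auto
  show ?thesis
  proof (cases w)
    case True
    have "norm_bounded_on (dm*(dp*k)) (kron (1\<^sub>m dm) (kron (if iv then adj Op else Op) (1\<^sub>m k)))
       (1*(1*1)) {i. i div (dp*k) \<in> UNIV \<and> i mod (dp*k) \<in> {i. i div k \<in> UNIV \<and> i mod k \<in> UNIV}}"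
      by (intro norm_bounded_on_kron I O1)
    moreover have "query_action k Om Op w iv = kron (1\<^sub>m dm) (kron (if iv then adj Op else Op) (1\<^sub>m k))"
      using True dims unfolding query_action_def Let_def by simp
    ultimately show ?thesis by (simp add: mult_ac)
  next
    case False
    have "norm_bounded_on (dm*(dp*k)) (kron (if iv then adj Om else Om) (1\<^sub>m (dp*k))) (1*1)
       {i. i div (dp*k) \<in> UNIV \<and> i mod (dp*k) \<in> UNIV}"
      by (intro norm_bounded_on_kron I O1)
    moreover have "query_action k Om Op w iv = kron (if iv then adj Om else Om) (1\<^sub>m (dp*k))"
      using False dims unfolding query_action_def Let_def by simp
    ultimately show ?thesis by (simp add: mult_ac)
  qed
qed

lemma embed_query_norm_bounded:
  assumes "unitary dm Om" "unitary dp Op"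
  shows "norm_bounded_on (2*(dm*dp*k)) (embed_query k Om Op q) 1 UNIV"
proof -
  obtain w iv c where q: "q = (w,iv,c)" by (cases q) auto
  have C: "Om \<in> carrier_mat dm dm" "Op \<in> carrier_mat dp dp"
    using assms unfolding unitary_def by auto
  have "norm_bounded_on (2*(dm*dp*k)) (controlled_mat (if c then 1\<^sub>m (dm*dp*k)
     else query_action k Om Op w iv) (query_action k Om Op w iv)) 1 {i. i mod (dm*dp*k) \<in> UNIV}"
    using unitary_norm_bounded_on[OF unitary_one] query_action_norm_bounded[OF assms]
    by (intro norm_bounded_on_controlled) auto
  then show ?thesis unfolding q embed_query_eq_controlled[OF C] by (elim norm_bounded_on_cong) auto
qed

lemma embed_query_diff_norm_bounded:
  assumes U: "unitary dm Om" "unitary dp Op" "unitary dp Op'"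
    and D: "norm_bounded_on dp (Op' - Op) \<delta> S" "norm_bounded_on dp (adj Op' - adj Op) \<delta> S"
  shows "norm_bounded_on (2*(dm*dp*k)) (embed_query k Om Op' q - embed_query k Om Op q) \<delta>
           {i. (i mod (dm*dp*k) mod (dp*k)) div k \<in> S}"
proof -
  obtain w iv c where q: "q = (w,iv,c)" by (cases q) auto
  have C: "Om \<in> carrier_mat dm dm" "Op \<in> carrier_mat dp dp" "Op' \<in> carrier_mat dp dp"
    using U unfolding unitary_def by auto
  have dl: "\<delta> \<ge> 0" using D unfolding norm_bounded_on_def by auto
  let ?S = "{i. (i mod (dp*k)) div k \<in> S}"
  let ?E = "query_action k Om Op w iv" and ?E' = "query_action k Om Op' w iv"
  have EC: "?E \<in> carrier_mat (dm*dp*k) (dm*dp*k)" "?E' \<in> carrier_mat (dm*dp*k) (dm*dp*k)"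
    using query_action_carrier[OF C(1,2)] query_action_carrier[OF C(1,3)] by auto
  have action_diff: "norm_bounded_on (dm*dp*k) (?E' - ?E) \<delta> ?S"
  proof (cases w)
    case True
    define O1 where "O1 = (if iv then adj Op else Op)"
    define O1' where "O1' = (if iv then adj Op' else Op')"
    have O1C: "O1 \<in> carrier_mat dp dp" "O1' \<in> carrier_mat dp dp"
      using C unfolding O1_def O1'_def by (auto simp: adj_def)
    have "?E' - ?E = kron (1\<^sub>m dm) (kron O1' (1\<^sub>m k)) - kron (1\<^sub>m dm) (kron O1 (1\<^sub>m k))"
      using True C unfolding query_action_def Let_def O1_def O1'_def by auto
    also have "\<dots> = kron (1\<^sub>m dm) (kron O1' (1\<^sub>m k) - kron O1 (1\<^sub>m k))"
      using O1C by (intro kron_minus_right[where a=dm and b="dp*k"] one_carrier_mat kron_carrier)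
    also have "\<dots> = kron (1\<^sub>m dm) (kron (O1' - O1) (1\<^sub>m k))"
      using kron_minus_left[OF O1C(2) O1C(1) one_carrier_mat[of k]] by simp
    finally have e: "?E' - ?E = kron (1\<^sub>m dm) (kron (O1' - O1) (1\<^sub>m k))" .
    have "norm_bounded_on dp (O1' - O1) \<delta> S" using D unfolding O1_def O1'_def by auto
    then have "norm_bounded_on (dm*(dp*k)) (kron (1\<^sub>m dm) (kron (O1' - O1) (1\<^sub>m k))) (1*(\<delta>*1))
       {i. i div (dp*k) \<in> UNIV \<and> i mod (dp*k) \<in> {i. i div k \<in> S \<and> i mod k \<in> UNIV}}"
      by (intro norm_bounded_on_kron unitary_norm_bounded_on[OF unitary_one])
    then show ?thesis unfolding e by (elim norm_bounded_on_cong) (auto simp: mult_ac)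
  next
    case False
    then have "?E' = ?E" unfolding query_action_def Let_def using C by simp
    then show ?thesis using EC dl by (simp add: norm_bounded_on_zero)
  qed
  have "norm_bounded_on (2*(dm*dp*k)) (controlled_mat
     ((if c then 1\<^sub>m (dm*dp*k) else ?E') - (if c then 1\<^sub>m (dm*dp*k) else ?E)) (?E' - ?E))
     \<delta> {i. i mod (dm*dp*k) \<in> ?S}"
    using action_diff dl by (intro norm_bounded_on_controlled) (auto intro: norm_bounded_on_zero simp: minus_r_inv_mat[OF one_carrier_mat])
  moreover have "embed_query k Om Op' q - embed_query k Om Op q = controlled_mat
     ((if c then 1\<^sub>m (dm*dp*k) else ?E') - (if c then 1\<^sub>m (dm*dp*k) else ?E)) (?E' - ?E)"
    unfolding q embed_query_eq_controlled[OF C(1,2)] embed_query_eq_controlled[OF C(1,3)]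
    using EC by (intro controlled_mat_minus) auto
  ultimately show ?thesis by simp
qed

section \<open>The hybrid argument\<close>

lemma alg_state_carrier_vnorm2_le:
  assumes U: "\<forall>t\<le>T. unitary (2*(dm*dp*k)) (U t)" and O: "unitary dm Om" "unitary dp Op"
  shows "alg_state (2*(dm*dp*k)) k U q Om Op T \<in> carrier_vec (2*(dm*dp*k)) \<and>
         vnorm2 (alg_state (2*(dm*dp*k)) k U q Om Op T) \<le> 1"
  using U
proof (induction T)
  case 0
  have "vnorm2 (unit_vec (2*(dm*dp*k)) 0) = (\<Sum>i<2*(dm*dp*k). if i = 0 then 1 else 0)"
    unfolding vnorm2_def by (intro sum.cong) (auto simp: unit_vec_def)
  then have "vnorm2 (unit_vec (2*(dm*dp*k)) 0) \<le> 1" by (simp add: sum.delta)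
  then show ?case using 0 by (auto simp: unitary_vnorm2 unitary_def)
next
  case (Suc T)
  let ?s = "alg_state (2*(dm*dp*k)) k U q Om Op T"
  have s: "?s \<in> carrier_vec (2*(dm*dp*k))" "vnorm2 ?s \<le> 1" using Suc by auto
  have Q: "norm_bounded_on (2*(dm*dp*k)) (embed_query k Om Op (q (Suc T))) 1 UNIV"
    by (rule embed_query_norm_bounded[OF O])
  then have "embed_query k Om Op (q (Suc T)) *\<^sub>v ?s \<in> carrier_vec (2*(dm*dp*k))"
    and "vnorm2 (embed_query k Om Op (q (Suc T)) *\<^sub>v ?s) \<le> vnorm2 ?s"
    using s unfolding norm_bounded_on_def by (auto simp: vnorm2_on_UNIV)
  then show ?case using Suc.prems s by (auto simp: unitary_vnorm2 unitary_def)
qed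


lemma alg_state_hybrid:
  assumes U: "\<forall>t\<le>T. unitary (2*(dm*dp*k)) (U t)"
    and O: "unitary dm Om" "unitary dp Op" "unitary dp Op'"
  shows "vnorm (alg_state (2*(dm*dp*k)) k U q Om Op' T - alg_state (2*(dm*dp*k)) k U q Om Op T) \<le>
    (\<Sum>t<T. vnorm ((embed_query k Om Op' (q (Suc t)) - embed_query k Om Op (q (Suc t))) *\<^sub>v
                  alg_state (2*(dm*dp*k)) k U q Om Op t))"
  using U
proof (induction T)
  case 0
  then show ?case by (simp add: vnorm_def vnorm2_def)
next
  case (Suc T)
  let ?D = "2*(dm*dp*k)"
  let ?a = "alg_state ?D k U q Om Op' T" and ?b = "alg_state ?D k U q Om Op T"
  let ?Q' = "embed_query k Om Op' (q (Suc T))" and ?Q = "embed_query k Om Op (q (Suc T))"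
  have UT: "\<forall>t\<le>T. unitary ?D (U t)" and UU: "unitary ?D (U (Suc T))" using Suc.prems by auto
  have a: "?a \<in> carrier_vec ?D" and b: "?b \<in> carrier_vec ?D"
    using alg_state_carrier_vnorm2_le[OF UT O(1,3)] alg_state_carrier_vnorm2_le[OF UT O(1,2)] by auto
  have Q'b: "norm_bounded_on ?D ?Q' 1 UNIV" by (rule embed_query_norm_bounded[OF O(1,3)])
  have Qc: "?Q \<in> carrier_mat ?D ?D" "?Q' \<in> carrier_mat ?D ?D"
    using embed_query_norm_bounded[OF O(1,2)] Q'b unfolding norm_bounded_on_def by auto
  have UC: "U (Suc T) \<in> carrier_mat ?D ?D" using UU unfolding unitary_def by auto
  \<comment> \<open>the error introduced by the last query is added to the propagated earlier error\<close>
  have split: "?Q' *\<^sub>v ?a - ?Q *\<^sub>v ?b = ?Q' *\<^sub>v (?a - ?b) + (?Q' - ?Q) *\<^sub>v ?b"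
    using Qc a b by (intro eq_vecI)
      (auto simp: mult_minus_distrib_mat_vec minus_mult_distrib_mat_vec)
  have "vnorm (alg_state ?D k U q Om Op' (Suc T) - alg_state ?D k U q Om Op (Suc T))
      = vnorm (?Q' *\<^sub>v (?a - ?b) + (?Q' - ?Q) *\<^sub>v ?b)"
    using UU UC Qc a b
    by (simp add: mult_minus_distrib_mat_vec[symmetric] split[symmetric] vnorm_unitary)
  also have "\<dots> \<le> vnorm (?Q' *\<^sub>v (?a - ?b)) + vnorm ((?Q' - ?Q) *\<^sub>v ?b)"
    using Qc by (intro vnorm_add_le) auto
  also have "\<dots> \<le> vnorm (?a - ?b) + vnorm ((?Q' - ?Q) *\<^sub>v ?b)"
    using norm_bounded_on_1_UNIV_vnorm[OF Q'b, of "?a - ?b"] a b by auto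
  also have "\<dots> \<le> (\<Sum>t<Suc T. vnorm ((embed_query k Om Op' (q (Suc t)) - embed_query k Om Op (q (Suc t)))
                  *\<^sub>v alg_state ?D k U q Om Op t))"
    using Suc.IH[OF UT] by simp
  finally show ?case .
qed

lemma hybrid_query_lower_bound:
  assumes m: "m > 0" and \<delta>: "\<delta> > 0" and \<gamma>: "\<gamma> > 0"
    and U: "\<forall>t\<le>T. unitary (2*(dm*dp*k)) (U t)"
    and O: "unitary dm Om" "unitary dp Op0" "\<And>j. j < m \<Longrightarrow> unitary dp (Op j)"
    and diff: "\<And>j. j < m \<Longrightarrow> norm_bounded_on dp (Op j - Op0) \<delta> {p. h p = j}"
    and diff_adj: "\<And>j. j < m \<Longrightarrow> norm_bounded_on dp (adj (Op j) - adj Op0) \<delta> {p. h p = j}"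
    and distinct: "\<And>j. j < m \<Longrightarrow>
      vnorm (alg_state (2*(dm*dp*k)) k U q Om (Op j) T - alg_state (2*(dm*dp*k)) k U q Om Op0 T) \<ge> \<gamma>"
  shows "real T \<ge> \<gamma> * sqrt (real m) / \<delta>"
proof -
  let ?D = "2*(dm*dp*k)"
  let ?s = "\<lambda>t. alg_state ?D k U q Om Op0 t"
  let ?d = "\<lambda>j t. vnorm ((embed_query k Om (Op j) (q (Suc t)) - embed_query k Om Op0 (q (Suc t))) *\<^sub>v ?s t)"
  define g where "g i = h ((i mod (dm*dp*k) mod (dp*k)) div k)" for i
  \<comment> \<open>the queries to the m perturbed oracles see disjoint parts of the state (Cauchy-Schwarz)\<close>
  have step: "(\<Sum>j<m. ?d j t) \<le> \<delta> * sqrt (real m)" if t: "t < T" for t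
  proof -
    have UT: "\<forall>t'\<le>t. unitary ?D (U t')" using U t by auto
    have s: "?s t \<in> carrier_vec ?D" "vnorm2 (?s t) \<le> 1"
      using alg_state_carrier_vnorm2_le[OF UT O(1,2)] by auto
    have "?d j t \<le> \<delta> * sqrt (vnorm2_on {i. g i = j} (?s t))" if j: "j < m" for j
      using norm_bounded_onD[OF embed_query_diff_norm_bounded[OF O(1,2) O(3)[OF j]
            diff[OF j] diff_adj[OF j]] s(1)]
      unfolding g_def by simp
    then have "(\<Sum>j<m. ?d j t) \<le> \<delta> * (\<Sum>j<m. sqrt (vnorm2_on {i. g i = j} (?s t)))"
      unfolding sum_distrib_left by (intro sum_mono) auto
    also have "\<dots> \<le> \<delta> * (sqrt (real m) * sqrt (\<Sum>j<m. vnorm2_on {i. g i = j} (?s t)))"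
      using \<delta> by (intro mult_left_mono sum_sqrt_le_sqrt_mult_sum vnorm2_on_nonneg) auto
    also have "\<dots> \<le> \<delta> * sqrt (real m)"
      using \<delta> sum_vnorm2_on_fibres_le[where m=m and g=g and v="?s t"] s(2) by (simp add: mult_left_le)
    finally show ?thesis .
  qed
  have "real m * \<gamma> \<le> (\<Sum>j<m. \<Sum>t<T. ?d j t)"
    using sum_mono[of "{..<m}" "\<lambda>_. \<gamma>" "\<lambda>j. \<Sum>t<T. ?d j t"]
      distinct alg_state_hybrid[OF U O(1,2) O(3)] by (fastforce intro: order_trans)
  also have "\<dots> = (\<Sum>t<T. \<Sum>j<m. ?d j t)" by (rule sum.swap)
  also have "\<dots> \<le> real T * (\<delta> * sqrt (real m))"
    using sum_mono[of "{..<T}" "\<lambda>t. \<Sum>j<m. ?d j t" "\<lambda>_. \<delta> * sqrt (real m)"] step by simp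
  finally have "sqrt (real m) * (\<gamma> * sqrt (real m)) \<le> sqrt (real m) * (real T * \<delta>)"
    by (simp add: mult_ac)
  then have "\<gamma> * sqrt (real m) \<le> real T * \<delta>" using m by simp
  then show ?thesis using \<delta> by (simp add: divide_le_eq)
qed

lemma success_prob_eq_vnorm2_on:
  "alg_state D k U q Om Op T \<in> carrier_vec D \<Longrightarrow> success_prob D k U q out T Om Op target eps
     = vnorm2_on {i. \<bar>out i - target\<bar> \<le> eps} (alg_state D k U q Om Op T)"
  unfolding success_prob_def vnorm2_on_def by (intro sum.cong) auto

lemma vnorm_diff_ge_if_separated:
  assumes dim: "dim_vec a = dim_vec b" and b: "vnorm2 b \<le> 1" and AB: "A \<inter> B = {}"
    and a_on_A: "vnorm2_on A a \<ge> 2/3" and b_on_B: "vnorm2_on B b \<ge> 2/3"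
  shows "vnorm (b - a) \<ge> 1/5"
proof -
  have "vnorm2_on A b \<le> 1/3" using vnorm2_on_disjoint_le[OF AB, of b] b b_on_B by linarith
  then have b_A: "sqrt (vnorm2_on A b) \<le> 3/5"
    by (intro real_le_lsqrt) (auto simp: vnorm2_on_nonneg power2_eq_square)
  have a_A: "4/5 \<le> sqrt (vnorm2_on A a)"
    using a_on_A by (intro real_le_rsqrt) (auto simp: power2_eq_square)
  have "a = (a - b) + b" using dim by (intro eq_vecI) auto
  then have "sqrt (vnorm2_on A a) \<le> sqrt (vnorm2_on A (a - b)) + sqrt (vnorm2_on A b)"
    using sqrt_vnorm2_on_add_le[of b "a - b" A] dim by simp
  also have "sqrt (vnorm2_on A (a - b)) \<le> vnorm (a - b)"
    unfolding vnorm_def by (simp add: vnorm2_on_le_vnorm2)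
  finally show ?thesis using b_A a_A vnorm_minus_commute[OF dim] by simp
qed

section \<open>Block-diagonal rotations\<close>

text \<open>Block beta of rot_blocks n xf yf is the rotation ((x, -y), (y, x)) with x = xf beta and
  y = yf beta; its first column (x, y) is the qubit it prepares.\<close>
definition rot_entry :: "real \<Rightarrow> real \<Rightarrow> nat \<Rightarrow> nat \<Rightarrow> complex" where
  "rot_entry x y r c = complex_of_real (if r = c then x else if r = 0 then - y else y)"

definition rot_blocks :: "nat \<Rightarrow> (nat \<Rightarrow> real) \<Rightarrow> (nat \<Rightarrow> real) \<Rightarrow> complex mat" where
  "rot_blocks n xf yf = mat n n (\<lambda>(r,c). if r div 2 = c div 2 then rot_entry (xf (r div 2)) (yf (r div 2)) (r mod 2) (c mod 2) else 0)"

lemma rot_blocks_carrier[simp]: "rot_blocks n xf yf \<in> carrier_mat n n"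
  unfolding rot_blocks_def by auto

lemma rot_blocks_dims [simp]: "dim_row (rot_blocks n xf yf) = n" "dim_col (rot_blocks n xf yf) = n"
  unfolding rot_blocks_def by auto

lemma rot_blocks_index: "r < n \<Longrightarrow> c < n \<Longrightarrow> rot_blocks n xf yf $$ (r,c) =
   (if r div 2 = c div 2 then rot_entry (xf (r div 2)) (yf (r div 2)) (r mod 2) (c mod 2) else 0)"
  unfolding rot_blocks_def by auto

lemma sum_lessThan_supported_on_block:
  fixes f :: "nat \<Rightarrow> 'a::comm_monoid_add"
  assumes n: "n = 2*p" and b: "\<beta> < p" and z: "\<And>l. l < n \<Longrightarrow> l div 2 \<noteq> \<beta> \<Longrightarrow> f l = 0"
  shows "(\<Sum>l<n. f l) = f (2*\<beta>) + f (2*\<beta>+1)"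
proof -
  have "(\<Sum>l<n. f l) = (\<Sum>i1<p. \<Sum>i2<2. f (i1*2+i2))" unfolding n by (simp add: sum_lessThan_mult mult.commute)
  also have "\<dots> = (\<Sum>i1<p. if i1 = \<beta> then f (2*\<beta>) + f (2*\<beta>+1) else 0)"
  proof (intro sum.cong refl)
    fix i1 assume i1: "i1 \<in> {..<p}"
    show "(\<Sum>i2<2. f (i1*2+i2)) = (if i1 = \<beta> then f (2*\<beta>) + f (2*\<beta>+1) else 0)"
    proof (cases "i1 = \<beta>")
      case True then show ?thesis by (simp add: sum_lessThan_2 mult.commute)
    next
      case False
      have "f (i1*2+i2) = 0" if "i2 < 2" for i2
      proof (rule z)
        show "i1*2+i2 < n" using mult_add_less_mult[of i1 p i2 2] that i1 n by (simp add: mult.commute)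
        show "(i1*2+i2) div 2 \<noteq> \<beta>" using that False by simp
      qed
      then show ?thesis using False by (simp add: sum_lessThan_2)
    qed
  qed
  also have "\<dots> = f (2*\<beta>) + f (2*\<beta>+1)" using b by (simp add: sum.delta)
  finally show ?thesis .
qed

lemma adj_rot_blocks: "adj (rot_blocks n xf yf) = rot_blocks n xf (\<lambda>b. - yf b)"
  unfolding adj_def
proof (intro eq_matI)
  fix r c assume "r < dim_row (rot_blocks n xf (\<lambda>b. - yf b))" "c < dim_col (rot_blocks n xf (\<lambda>b. - yf b))"
  then have rc: "r < n" "c < n" by auto
  have parity: "r mod 2 = 0 \<or> r mod 2 = 1" "c mod 2 = 0 \<or> c mod 2 = 1" by auto
  show "mat (dim_col (rot_blocks n xf yf)) (dim_row (rot_blocks n xf yf)) (\<lambda>(i, j). cnj (rot_blocks n xf yf $$ (j, i))) $$ (r, c) =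
        rot_blocks n xf (\<lambda>b. - yf b) $$ (r, c)"
    using rc parity
    by (auto simp: rot_blocks_index rot_entry_def)
qed auto

lemma rot_blocks_adj_mult:
  assumes n: "n = 2*p" and u: "\<And>b. b < p \<Longrightarrow> (xf b)\<^sup>2 + (yf b)\<^sup>2 = 1"
  shows "rot_blocks n xf (\<lambda>b. - yf b) * rot_blocks n xf yf = 1\<^sub>m n"
proof (intro eq_matI)
  fix r c assume "r < dim_row (1\<^sub>m n)" "c < dim_col (1\<^sub>m n)"
  then have rc: "r < n" "c < n" by auto
  define \<beta> where "\<beta> = r div 2"
  have b: "\<beta> < p" using rc n unfolding \<beta>_def by auto
  have l1: "2*\<beta> < n" "2*\<beta>+1 < n" using b n by auto
  have "(rot_blocks n xf (\<lambda>b. - yf b) * rot_blocks n xf yf) $$ (r,c) =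
     (\<Sum>l<n. rot_blocks n xf (\<lambda>b. - yf b) $$ (r,l) * rot_blocks n xf yf $$ (l,c))"
    using rc by (simp add: scalar_prod_def atLeast0LessThan row_def col_def)
  also have "\<dots> = rot_blocks n xf (\<lambda>b. - yf b) $$ (r,2*\<beta>) * rot_blocks n xf yf $$ (2*\<beta>,c)
      + rot_blocks n xf (\<lambda>b. - yf b) $$ (r,2*\<beta>+1) * rot_blocks n xf yf $$ (2*\<beta>+1,c)"
    by (rule sum_lessThan_supported_on_block[OF n b]) (auto simp: rot_blocks_index rc \<beta>_def)
  also have "\<dots> = 1\<^sub>m n $$ (r,c)"
  proof -
    have x: "complex_of_real (xf \<beta>) * complex_of_real (xf \<beta>) + complex_of_real (yf \<beta>) * complex_of_real (yf \<beta>) = 1"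
      using u[OF b] by (simp add: power2_eq_square flip: of_real_mult of_real_add)
    have d1: "(2*\<beta>) div 2 = \<beta>" "(2*\<beta>+1) div 2 = \<beta>" "(2*\<beta>) mod 2 = 0" "(2*\<beta>+1) mod 2 = 1" by auto
    have rr: "r = 2*\<beta> \<or> r = 2*\<beta>+1" unfolding \<beta>_def by auto
    consider (c0) "c = 2*\<beta>" | (c1) "c = 2*\<beta>+1" | (cn) "c div 2 \<noteq> \<beta>" by linarith
    then show ?thesis
    proof cases
      case c0 then show ?thesis using rr l1 x by (auto simp: rot_blocks_index rot_entry_def d1 algebra_simps)
    next
      case c1 then show ?thesis using rr l1 x by (auto simp: rot_blocks_index rot_entry_def d1 algebra_simps)
    next
      case cn
      then have "c \<noteq> r" unfolding \<beta>_def by auto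
      then show ?thesis using cn rc l1 by (simp add: rot_blocks_index d1)
    qed
  qed
  finally show "(rot_blocks n xf (\<lambda>b. - yf b) * rot_blocks n xf yf) $$ (r,c) = 1\<^sub>m n $$ (r,c)" .
qed auto

lemma unitary_rot_blocks:
  assumes n: "n = 2*p" and u: "\<And>b. b < p \<Longrightarrow> (xf b)\<^sup>2 + (yf b)\<^sup>2 = 1"
  shows "unitary n (rot_blocks n xf yf)"
proof -
  have u2: "\<And>b. b < p \<Longrightarrow> (xf b)\<^sup>2 + (- yf b)\<^sup>2 = 1" using u by simp
  show ?thesis unfolding unitary_def adj_rot_blocks
    using rot_blocks_adj_mult[OF n u] rot_blocks_adj_mult[OF n u2] by simp
qed

lemma rot_blocks_minus: "rot_blocks n xf yf - rot_blocks n xf' yf' = rot_blocks n (\<lambda>b. xf b - xf' b) (\<lambda>b. yf b - yf' b)"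
  by (intro eq_matI) (auto simp: rot_blocks_index rot_entry_def)

lemma cmod_rot_entry_le: "\<bar>x\<bar> \<le> d \<Longrightarrow> \<bar>y\<bar> \<le> d \<Longrightarrow> cmod (rot_entry x y r c) \<le> d"
  unfolding rot_entry_def by auto

lemma norm_bounded_on_rot_blocks:
  assumes n: "n = 2*p" and b0: "\<beta>0 < p"
    and z: "\<And>b. b \<noteq> \<beta>0 \<Longrightarrow> xd b = 0 \<and> yd b = 0"
    and dx: "\<bar>xd \<beta>0\<bar> \<le> d" and dy: "\<bar>yd \<beta>0\<bar> \<le> d"
  shows "norm_bounded_on n (rot_blocks n xd yd) (2*d) {l. l div 2 = \<beta>0}"
  unfolding norm_bounded_on_def
proof (intro conjI ballI)
  show "rot_blocks n xd yd \<in> carrier_mat n n" by simp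
  show "2*d \<ge> 0" using dx by simp
  fix v :: "complex vec" assume v: "v \<in> carrier_vec n"
  let ?M = "rot_blocks n xd yd"
  let ?a = "cmod (v $ (2*\<beta>0))" and ?b = "cmod (v $ (2*\<beta>0+1))"
  have l1: "2*\<beta>0 < n" "2*\<beta>0+1 < n" using b0 n by auto
  have Mv: "(?M *\<^sub>v v) $ r = (\<Sum>c<n. ?M $$ (r,c) * v $ c)" if "r < n" for r
    using that by (intro mult_mat_vec_nth_sum[OF _ v]) auto
  have outside: "(?M *\<^sub>v v) $ r = 0" if "r < n" "r div 2 \<noteq> \<beta>0" for r
    unfolding Mv[OF that(1)] using that z[of "r div 2"]
    by (intro sum.neutral) (auto simp: rot_blocks_index rot_entry_def)
  have inside: "cmod ((?M *\<^sub>v v) $ r) \<le> d * (?a + ?b)" if r: "r < n" "r div 2 = \<beta>0" for r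
  proof -
    have "(?M *\<^sub>v v) $ r = ?M $$ (r,2*\<beta>0) * v $ (2*\<beta>0) + ?M $$ (r,2*\<beta>0+1) * v $ (2*\<beta>0+1)"
      unfolding Mv[OF r(1)] using r
      by (intro sum_lessThan_supported_on_block[OF n b0]) (auto simp: rot_blocks_index)
    also have "cmod \<dots> \<le> d * ?a + d * ?b"
      using r l1 dx dy
      by (intro norm_triangle_le add_mono) (auto simp: norm_mult rot_blocks_index
          intro!: mult_right_mono cmod_rot_entry_le)
    finally show ?thesis by (simp add: distrib_left)
  qed
  have "vnorm2 (?M *\<^sub>v v) = (\<Sum>r<n. (cmod ((?M *\<^sub>v v) $ r))\<^sup>2)"
    by (simp add: vnorm2_def)
  also have "\<dots> = (cmod ((?M *\<^sub>v v) $ (2*\<beta>0)))\<^sup>2 + (cmod ((?M *\<^sub>v v) $ (2*\<beta>0+1)))\<^sup>2"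
    by (intro sum_lessThan_supported_on_block[OF n b0]) (auto simp: outside simp del: index_mult_mat_vec)
  also have "\<dots> \<le> 2 * (d * (?a + ?b))\<^sup>2"
    using power_mono[OF inside[OF l1(1)] norm_ge_zero, of 2] power_mono[OF inside[OF l1(2)] norm_ge_zero, of 2]
    by simp
  also have "\<dots> = d\<^sup>2 * (2 * (?a + ?b)\<^sup>2)" by (simp add: power_mult_distrib)
  also have "\<dots> \<le> d\<^sup>2 * (2 * (2 * (?a\<^sup>2 + ?b\<^sup>2)))"
  proof -
    have "(?a + ?b)\<^sup>2 + (?a - ?b)\<^sup>2 = 2 * (?a\<^sup>2 + ?b\<^sup>2)"
      by (simp add: power2_eq_square algebra_simps)
    then show ?thesis using zero_le_power2[of "?a - ?b"] by - (rule mult_left_mono, linarith, rule zero_le_power2)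
  qed
  also have "\<dots> = (2*d)\<^sup>2 * (?a\<^sup>2 + ?b\<^sup>2)" by (simp add: power_mult_distrib)
  also have "?a\<^sup>2 + ?b\<^sup>2 = vnorm2_on {l. l div 2 = \<beta>0} v"
    using v unfolding vnorm2_on_eq_sum_if
    by (simp only: carrier_vecD) (subst sum_lessThan_supported_on_block[OF n b0], auto)
  finally show "vnorm2 (?M *\<^sub>v v) \<le> (2*d)\<^sup>2 * vnorm2_on {l. l div 2 = \<beta>0} v" .
qed


definition scalar_mat :: "complex \<Rightarrow> complex mat" where
  "scalar_mat z = mat 1 1 (\<lambda>_. z)"

lemma scalar_mat_carrier [simp]: "scalar_mat z \<in> carrier_mat 1 1" "scalar_mat z \<in> carrier_mat (Suc 0) (Suc 0)"
  and scalar_mat_dims [simp]: "dim_row (scalar_mat z) = 1" "dim_col (scalar_mat z) = 1"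
  and scalar_mat_index [simp]: "scalar_mat z $$ (0,0) = z"
  unfolding scalar_mat_def by auto

lemma one_mat_1_eq_scalar_mat: "1\<^sub>m 1 = scalar_mat 1"
  unfolding scalar_mat_def by (intro eq_matI) auto

lemma mtrace_scalar_mat_mult: "X \<in> carrier_mat 1 1 \<Longrightarrow> mtrace (scalar_mat a * X) = a * X $$ (0,0)"
  unfolding mtrace_def by (simp add: scalar_prod_def row_def col_def scalar_mat_def)

lemma psd_1D:
  assumes "psd 1 X"
  shows "X \<in> carrier_mat 1 1" "Re (X $$ (0,0)) \<ge> 0"
proof -
  show X: "X \<in> carrier_mat 1 1" using assms unfolding psd_def hermitian_def by auto
  have "Re (cinner (unit_vec 1 0) (X *\<^sub>v unit_vec 1 0)) \<ge> 0"
    using assms unfolding psd_def by auto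
  moreover have "cinner (unit_vec 1 0) (X *\<^sub>v unit_vec 1 0) = X $$ (0,0)"
    using X unfolding cinner_def by (simp add: mult_mat_vec_nth_sum[OF X] del: index_mult_mat_vec)
  ultimately show "Re (X $$ (0,0)) \<ge> 0" by simp
qed

lemma psd_scalar_mat: "x \<ge> 0 \<Longrightarrow> psd 1 (scalar_mat (complex_of_real x))"
  unfolding psd_def hermitian_def
proof (intro conjI ballI)
  show "adj (scalar_mat (complex_of_real x)) = scalar_mat (complex_of_real x)"
    unfolding adj_def by (intro eq_matI) auto
  fix v :: "complex vec" assume v: "v \<in> carrier_vec 1"
  have "cinner v (scalar_mat (complex_of_real x) *\<^sub>v v) = complex_of_real x * cinner v v"
    using v unfolding cinner_def
    by (simp add: mult_mat_vec_nth_sum[OF scalar_mat_carrier(1) v] mult_ac del: index_mult_mat_vec)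
  then have e: "cinner v (scalar_mat (complex_of_real x) *\<^sub>v v) = complex_of_real (x * vnorm2 v)"
    by (simp add: cinner_self)
  assume "x \<ge> 0"
  then show "Im (cinner v (scalar_mat (complex_of_real x) *\<^sub>v v)) = 0"
    and "Re (cinner v (scalar_mat (complex_of_real x) *\<^sub>v v)) \<ge> 0"
    unfolding e by (auto simp: vnorm2_nonneg)
qed simp

locale scalar_lp =
  fixes m :: nat and \<alpha> :: "nat \<Rightarrow> real" and jmax :: nat
  assumes jmax: "jmax < m" and max_pos: "\<alpha> jmax > 0" and max: "\<And>j. j < m \<Longrightarrow> \<alpha> j \<le> \<alpha> jmax"
begin

definition A :: "nat \<Rightarrow> complex mat" where "A j = scalar_mat (complex_of_real (\<alpha> j))"

definition b :: "nat \<Rightarrow> real" where "b j = 1"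

lemma primal_feasible_iff:
  "primal_feasible 1 m (1\<^sub>m 1) A b X \<longleftrightarrow> psd 1 X \<and> (\<forall>j<m. \<alpha> j * Re (X $$ (0,0)) \<le> 1)"
  using psd_1D[of X] unfolding primal_feasible_def b_def A_def by (auto simp: mtrace_scalar_mat_mult)

lemma primal_obj_eq: "X \<in> carrier_mat 1 1 \<Longrightarrow> primal_obj (1\<^sub>m 1) X = Re (X $$ (0,0))"
  unfolding primal_obj_def one_mat_1_eq_scalar_mat by (simp add: mtrace_scalar_mat_mult)

definition X_opt :: "complex mat" where "X_opt = scalar_mat (complex_of_real (1 / \<alpha> jmax))"

lemma X_opt_feasible: "primal_feasible 1 m (1\<^sub>m 1) A b X_opt"
  unfolding primal_feasible_iff X_opt_def
proof (intro conjI allI impI psd_scalar_mat)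
  show "0 \<le> 1 / \<alpha> jmax" using max_pos by simp
  fix j assume "j < m"
  then show "\<alpha> j * Re (scalar_mat (complex_of_real (1 / \<alpha> jmax)) $$ (0, 0)) \<le> 1"
    using max[of j] max_pos by (simp add: field_simps)
qed

lemma primal_obj_le:
  assumes "primal_feasible 1 m (1\<^sub>m 1) A b X"
  shows "primal_obj (1\<^sub>m 1) X \<le> 1 / \<alpha> jmax"
proof -
  have "X \<in> carrier_mat 1 1" and "\<alpha> jmax * Re (X $$ (0,0)) \<le> 1"
    using assms psd_1D(1) jmax unfolding primal_feasible_iff by auto
  then show ?thesis using max_pos by (simp add: primal_obj_eq[simplified] field_simps mult.commute)
qed

lemma primal_obj_X_opt: "primal_obj (1\<^sub>m 1) X_opt = 1 / \<alpha> jmax"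
  unfolding X_opt_def by (simp add: primal_obj_eq[simplified])

lemma primal_optimal_X_opt: "primal_optimal 1 m (1\<^sub>m 1) A b X_opt"
  unfolding primal_optimal_def using X_opt_feasible primal_obj_le primal_obj_X_opt by auto

lemma trace_X_opt: "Re (mtrace X_opt) = 1 / \<alpha> jmax"
  unfolding X_opt_def mtrace_def by simp

lemma opt_val_eq: "opt_val 1 m (1\<^sub>m 1) A b = 1 / \<alpha> jmax"
  unfolding opt_val_def
  by (rule cSup_eq_maximum) (use X_opt_feasible primal_obj_X_opt primal_obj_le in \<open>auto intro!: image_eqI\<close>)

definition y_opt :: "nat \<Rightarrow> real" where "y_opt j = (if j = jmax then 1 / \<alpha> jmax else 0)"

lemma dual_slack_eq: "mat 1 1 (\<lambda>(r,c). \<Sum>j<m. complex_of_real (y j) * A j $$ (r,c)) - 1\<^sub>m 1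
   = scalar_mat (complex_of_real ((\<Sum>j<m. y j * \<alpha> j) - 1))"
  unfolding A_def scalar_mat_def by (intro eq_matI) auto

lemma dual_feasible_iff:
  "dual_feasible 1 m (1\<^sub>m 1) A y \<longleftrightarrow> (\<forall>j<m. y j \<ge> 0) \<and> (\<Sum>j<m. y j * \<alpha> j) \<ge> 1"
proof -
  have psd_iff: "psd 1 (scalar_mat (complex_of_real x)) \<longleftrightarrow> x \<ge> 0" for x
    using psd_1D(2) psd_scalar_mat by fastforce
  show ?thesis unfolding dual_feasible_def dual_slack_eq psd_iff by simp
qed

lemma sum_y_opt: "(\<Sum>j<m. y_opt j * \<alpha> j) = 1" "(\<Sum>j<m. y_opt j) = 1 / \<alpha> jmax"
proof -
  have "(\<Sum>j<m. y_opt j * \<alpha> j) = (\<Sum>j<m. if j = jmax then 1 / \<alpha> jmax * \<alpha> jmax else 0)"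
    unfolding y_opt_def by (intro sum.cong) auto
  then show "(\<Sum>j<m. y_opt j * \<alpha> j) = 1" using jmax max_pos by (simp add: sum.delta)
  show "(\<Sum>j<m. y_opt j) = 1 / \<alpha> jmax" using jmax unfolding y_opt_def by (simp add: sum.delta)
qed

lemma dual_optimal_y_opt: "dual_optimal 1 m (1\<^sub>m 1) A b y_opt"
  unfolding dual_optimal_def
proof (intro conjI allI impI)
  show "dual_feasible 1 m (1\<^sub>m 1) A y_opt"
    unfolding dual_feasible_iff sum_y_opt using max_pos by (simp add: y_opt_def)
  fix y assume "dual_feasible 1 m (1\<^sub>m 1) A y"
  then have y: "\<And>j. j < m \<Longrightarrow> y j \<ge> 0" and y_feas: "1 \<le> (\<Sum>j<m. y j * \<alpha> j)"
    unfolding dual_feasible_iff by auto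
  note y_feas
  also have "\<dots> \<le> (\<Sum>j<m. y j * \<alpha> jmax)" using y max by (intro sum_mono mult_left_mono) auto
  also have "\<dots> = \<alpha> jmax * (\<Sum>j<m. y j)" by (simp add: sum_distrib_left mult.commute)
  finally have "1 / \<alpha> jmax \<le> (\<Sum>j<m. y j)" using max_pos by (simp add: field_simps)
  then show "(\<Sum>j<m. b j * y_opt j) \<le> (\<Sum>j<m. b j * y j)" unfolding b_def using sum_y_opt by simp
qed

lemma sum_abs_y_opt: "(\<Sum>j<m. \<bar>y_opt j\<bar>) = 1 / \<alpha> jmax"
  using sum_y_opt(2) max_pos by (simp add: y_opt_def)

end

section \<open>The hard family\<close>

lemma Omu_trivial_encoding: "Omu m 1 enc I = 1\<^sub>m m"
  unfolding Omu_def by (intro eq_matI) auto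

definition amp :: "real \<Rightarrow> real" where
  "amp t = sqrt (1/2 + t)"

lemma amp_power2: "\<bar>t\<bar> \<le> 1/2 \<Longrightarrow> (amp t)\<^sup>2 = 1/2 + t"
  unfolding amp_def by simp

lemma amp_power2_add_amp_minus_power2: "\<bar>t\<bar> \<le> 1/2 \<Longrightarrow> (amp t)\<^sup>2 + (amp (- t))\<^sup>2 = 1"
  by (simp add: amp_power2)

lemma abs_amp_minus_amp_0:
  assumes t: "\<bar>t\<bar> \<le> 1/2"
  shows "\<bar>amp t - amp 0\<bar> \<le> 2 * \<bar>t\<bar>"
proof -
  have half: "1/2 \<le> amp 0" unfolding amp_def by (intro real_le_rsqrt) (simp add: power2_eq_square)
  have "0 \<le> amp t" unfolding amp_def using t by (simp add: abs_le_iff)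
  with half have sum_ge: "1/2 \<le> amp t + amp 0" by linarith
  have "(amp t - amp 0) * (amp t + amp 0) = (amp t)\<^sup>2 - (amp 0)\<^sup>2"
    by (simp add: power2_eq_square algebra_simps)
  also have "\<dots> = t" using t by (simp add: amp_power2)
  finally have prod: "(amp t - amp 0) * (amp t + amp 0) = t" .
  have "\<bar>t\<bar> = \<bar>amp t - amp 0\<bar> * \<bar>amp t + amp 0\<bar>"
    using arg_cong[OF prod, of abs] by (simp only: abs_mult)
  then have "\<bar>amp t - amp 0\<bar> * (amp t + amp 0) = \<bar>t\<bar>"
    using sum_ge by simp
  moreover have "\<bar>amp t - amp 0\<bar> * (1/2) \<le> \<bar>amp t - amp 0\<bar> * (amp t + amp 0)"
    using sum_ge by (intro mult_left_mono) auto
  ultimately have "\<bar>amp t - amp 0\<bar> * (1/2) \<le> \<bar>t\<bar>" by simp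
  then show ?thesis by (simp add: field_simps)
qed

definition qubit_state :: "real \<Rightarrow> complex vec" where
  "qubit_state t = vec 2 (\<lambda>i. complex_of_real (if i = 0 then amp t else amp (- t)))"

lemma vnorm2_qubit_state: "\<bar>t\<bar> \<le> 1/2 \<Longrightarrow> vnorm2 (qubit_state t) = 1"
  unfolding qubit_state_def vnorm2_def by (simp add: sum_lessThan_2 amp_power2_add_amp_minus_power2)

lemma rho_of_qubit_state:
  assumes "\<bar>t\<bar> \<le> 1/2"
  shows "rho_of 1 2 1 (qubit_state t) = scalar_mat (complex_of_real (1/2 + t))"
  unfolding rho_of_def scalar_mat_def qubit_state_def
  by (intro eq_matI) (simp_all add: amp_power2[OF assms, symmetric] power2_eq_square)

locale lp_hard_family =
  fixes B eps :: real and m :: nat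
  assumes B: "B \<ge> 1" and eps_pos: "0 < eps" and eps_le: "eps \<le> 1/2" and m: "m \<ge> 2"
begin

text \<open>Instance z < m raises the weight of constraint z; instance m is the unperturbed one.
  Block 2j + s of the state-preparation oracle prepares the purification of the density operator
  of sign s (0 for +, 1 for -) of constraint j, a qubit with amplitude amp (shift z (2j + s)) on |0>.\<close>
definition shift :: "nat \<Rightarrow> nat \<Rightarrow> real" where
  "shift z \<beta> = (if z < m \<and> \<beta> = 2*z then eps/B else if even \<beta> then 0 else - 1/(2*B))"

definition weight :: "nat \<Rightarrow> nat \<Rightarrow> real" where
  "weight z j = (if z < m \<and> j = z then 1/4 + eps/2 else 1/4)"

abbreviation dim_oracle :: nat where
  "dim_oracle \<equiv> m * 2 * (1 * 2 * 1)"

definition hard_instance :: "nat \<Rightarrow> qs_instance" where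
  "hard_instance z = \<lparr>psi = (\<lambda>j s. qubit_state (shift z (2*j+s))),
     mup = (\<lambda>_. B/2), mum = (\<lambda>_. B/2), muI = (\<lambda>_. 0),
     Opsi = rot_blocks dim_oracle (\<lambda>\<beta>. amp (shift z \<beta>)) (\<lambda>\<beta>. amp (- shift z \<beta>))\<rparr>"

lemma eps_div_B: "0 < eps/B" "eps/B \<le> 1/2" "1/(2*B) \<le> 1/2"
  using B eps_pos eps_le by (auto simp: field_simps)

lemma abs_shift_le: "\<bar>shift z \<beta>\<bar> \<le> 1/2"
  unfolding shift_def using eps_div_B B eps_pos by (auto simp: abs_mult)

lemma unitary_Opsi: "unitary dim_oracle (Opsi (hard_instance z))"
  unfolding hard_instance_def
  by (simp, rule unitary_rot_blocks[where p="2*m"])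
    (auto simp: amp_power2_add_amp_minus_power2[OF abs_shift_le])

lemma A_of_hard_instance: "A_of 1 2 1 (hard_instance z) j = scalar_mat (complex_of_real (weight z j))"
proof -
  have "Suc (2*j) \<noteq> 2*z" by presburger
  then have w: "B/2 * (1/2 + shift z (2*j)) - B/2 * (1/2 + shift z (2*j+1)) = weight z j"
    using B unfolding shift_def weight_def by (auto simp: field_simps)
  moreover have "A_of 1 2 1 (hard_instance z) j
      = complex_of_real (B/2) \<cdot>\<^sub>m rho_of 1 2 1 (qubit_state (shift z (2*j)))
      - complex_of_real (B/2) \<cdot>\<^sub>m rho_of 1 2 1 (qubit_state (shift z (2*j+1)))
      + complex_of_real 0 \<cdot>\<^sub>m 1\<^sub>m 1"
    unfolding A_of_def hard_instance_def by simp
  ultimately show ?thesis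
    unfolding rho_of_qubit_state[OF abs_shift_le]
    by (intro eq_matI) (simp_all add: scalar_mat_def flip: w)
qed

lemma Opsi_prepares_psi:
  assumes j: "j < m" and s: "s < 2"
  shows "Opsi (hard_instance z) *\<^sub>v unit_vec dim_oracle ((j*2+s)*(1*2*1))
    = vkron (vkron (unit_vec m j) (unit_vec 2 s)) (psi (hard_instance z) j s)"
proof -
  let ?O = "rot_blocks dim_oracle (\<lambda>\<beta>. amp (shift z \<beta>)) (\<lambda>\<beta>. amp (- shift z \<beta>))"
  let ?v = "vkron (vkron (unit_vec m j) (unit_vec 2 s)) (qubit_state (shift z (2*j+s)))"
  have "j*2+s < m*2" using j s by linarith
  then have c: "(j*2+s)*(1*2*1) < dim_oracle" by simp
  have "vec dim_oracle (\<lambda>r. ?O $$ (r, (j*2+s)*(1*2*1))) = ?v"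
  proof (rule eq_vecI)
    fix r assume "r < dim_vec ?v"
    then have r: "r < m*2*2" by (simp add: vkron_def qubit_state_def)
    have r2: "r div 2 div 2 < m" "r div 2 < m*2" using r by (auto simp: less_mult_imp_div_less)
    have "r div 2 = r div 2 div 2 * 2 + r div 2 mod 2" by simp
    then show "vec dim_oracle (\<lambda>r. ?O $$ (r, (j*2+s)*(1*2*1))) $ r = ?v $ r"
      using r r2 c j s
      by (auto simp: rot_blocks_index rot_entry_def vkron_def qubit_state_def mult.commute)
  qed (simp add: vkron_def qubit_state_def)
  then show ?thesis
    unfolding hard_instance_def using mult_mat_unit_vec[OF rot_blocks_carrier c] by simp
qed

lemma valid_hard_instance: "valid_instance m 1 2 1 B (hard_instance z)"
  unfolding valid_instance_def
proof (intro conjI allI impI)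
  fix j s assume "j < m" "s < (2::nat)"
  then show "Opsi (hard_instance z) *\<^sub>v unit_vec dim_oracle ((j*2+s)*(1*2*1)) =
      vkron (vkron (unit_vec m j) (unit_vec 2 s)) (psi (hard_instance z) j s)"
    by (rule Opsi_prepares_psi)
  show "psi (hard_instance z) j s \<in> carrier_vec (1*2*1)"
    by (simp add: hard_instance_def qubit_state_def)
  show "vnorm2 (psi (hard_instance z) j s) = 1"
    by (simp add: hard_instance_def vnorm2_qubit_state[OF abs_shift_le])
qed (use B unitary_Opsi in \<open>auto simp: hard_instance_def\<close>)

lemma scalar_lp_hard_instance: "scalar_lp m (weight z) (if z < m then z else 0)"
  by unfold_locales (use m eps_pos in \<open>auto simp: weight_def\<close>)

lemma A_of_hard_instance_eq: "A_of 1 2 1 (hard_instance z) = scalar_lp.A (weight z)"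
  by (rule ext) (simp only: A_of_hard_instance scalar_lp.A_def[OF scalar_lp_hard_instance])

lemma ones_eq_scalar_lp_b: "(\<lambda>_. 1::real) = scalar_lp.b"
  by (rule ext) (simp add: scalar_lp.b_def[OF scalar_lp_hard_instance[of 0]])

lemma opt_val_hard_instance:
  "opt_val 1 m (1\<^sub>m 1) (A_of 1 2 1 (hard_instance z)) (\<lambda>_. 1) = (if z < m then 1 / (1/4 + eps/2) else 4)"
  unfolding A_of_hard_instance_eq ones_eq_scalar_lp_b
  using scalar_lp.opt_val_eq[OF scalar_lp_hard_instance[of z]] by (simp add: weight_def)

lemma weight_ge: "1/4 \<le> weight z j"
  using eps_pos by (simp add: weight_def)

lemma hard_instance_lp_properties:
  "\<exists>X. primal_optimal 1 m (1\<^sub>m 1) (A_of 1 2 1 (hard_instance z)) (\<lambda>_. 1) X \<and> Re (mtrace X) \<le> 4"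
  "\<exists>y. dual_optimal 1 m (1\<^sub>m 1) (A_of 1 2 1 (hard_instance z)) (\<lambda>_. 1) y \<and> (\<Sum>j<m. \<bar>y j\<bar>) \<le> 4"
  "diagonal_mat (A_of 1 2 1 (hard_instance z) j)"
  "opnorm_le1 1 (A_of 1 2 1 (hard_instance z) j)"
proof -
  interpret scalar_lp m "weight z" "if z < m then z else 0" by (rule scalar_lp_hard_instance)
  have le4: "1 / weight z (if z < m then z else 0) \<le> 4"
    using weight_ge[of z "if z < m then z else 0"] by (simp add: field_simps)
  show "\<exists>X. primal_optimal 1 m (1\<^sub>m 1) (A_of 1 2 1 (hard_instance z)) (\<lambda>_. 1) X \<and> Re (mtrace X) \<le> 4"
    unfolding A_of_hard_instance_eq ones_eq_scalar_lp_b
    using primal_optimal_X_opt trace_X_opt le4 by auto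
  show "\<exists>y. dual_optimal 1 m (1\<^sub>m 1) (A_of 1 2 1 (hard_instance z)) (\<lambda>_. 1) y \<and> (\<Sum>j<m. \<bar>y j\<bar>) \<le> 4"
    unfolding A_of_hard_instance_eq ones_eq_scalar_lp_b
    using dual_optimal_y_opt sum_abs_y_opt le4 by auto
  show "diagonal_mat (A_of 1 2 1 (hard_instance z) j)"
    unfolding A_of_hard_instance diagonal_mat_def by simp
  have w: "0 \<le> weight z j" "weight z j \<le> 1" using eps_pos eps_le by (auto simp: weight_def)
  show "opnorm_le1 1 (A_of 1 2 1 (hard_instance z) j)"
    unfolding A_of_hard_instance opnorm_le1_def
  proof (intro conjI ballI)
    fix v :: "complex vec" assume v: "v \<in> carrier_vec 1"
    have "vnorm2 (scalar_mat (complex_of_real (weight z j)) *\<^sub>v v) = (weight z j)\<^sup>2 * (cmod (v $ 0))\<^sup>2"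
      using v unfolding vnorm2_def
      by (simp add: mult_mat_vec_nth_sum[OF scalar_mat_carrier(1) v] norm_mult power_mult_distrib
          del: index_mult_mat_vec)
    also have "\<dots> \<le> vnorm2 v"
      using v w unfolding vnorm2_def by (simp add: mult_left_le_one_le power_le_one)
    finally show "vnorm2 (scalar_mat (complex_of_real (weight z j)) *\<^sub>v v) \<le> vnorm2 v" .
  qed simp
qed

end

context lp_hard_family
begin

lemma Opsi_diff_norm_bounded:
  assumes j: "j < m"
  shows "norm_bounded_on dim_oracle (Opsi (hard_instance j) - Opsi (hard_instance m)) (4*eps/B) {p. p div 4 = j}"
    and "norm_bounded_on dim_oracle (adj (Opsi (hard_instance j)) - adj (Opsi (hard_instance m)))
           (4*eps/B) {p. p div 4 = j}"
proof -
  have n: "dim_oracle = 2*(2*m)" by simp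
  have b0: "2*j < 2*m" using j by simp
  have sub: "{l. l div 2 = 2*j} \<subseteq> {p. p div 4 = j}" by (auto simp: div_mult2_eq[symmetric])
  have off_block: "shift j \<beta> = shift m \<beta>" if "\<beta> \<noteq> 2*j" for \<beta>
    using that unfolding shift_def by auto
  have on_block: "shift j (2*j) = eps/B" "shift m (2*j) = 0"
    using j unfolding shift_def by auto
  have e: "\<bar>eps/B\<bar> \<le> 1/2" "\<bar>eps/B\<bar> = eps/B" using eps_div_B by (simp_all only: abs_of_pos)
  have amp_diff: "\<bar>amp (eps/B) - amp 0\<bar> \<le> 2*eps/B" "\<bar>amp (- (eps/B)) - amp 0\<bar> \<le> 2*eps/B"
    using abs_amp_minus_amp_0[OF e(1)] abs_amp_minus_amp_0[of "- (eps/B)", unfolded abs_minus_cancel, OF e(1)]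
    unfolding e(2) by simp_all
  have "norm_bounded_on dim_oracle (rot_blocks dim_oracle (\<lambda>\<beta>. amp (shift j \<beta>) - amp (shift m \<beta>))
     (\<lambda>\<beta>. amp (- shift j \<beta>) - amp (- shift m \<beta>))) (2*(2*eps/B)) {l. l div 2 = 2*j}"
    by (rule norm_bounded_on_rot_blocks[OF n b0]) (use off_block on_block amp_diff in auto)
  then show "norm_bounded_on dim_oracle (Opsi (hard_instance j) - Opsi (hard_instance m)) (4*eps/B) {p. p div 4 = j}"
    unfolding hard_instance_def by (simp add: rot_blocks_minus) (rule norm_bounded_on_mono[OF _ sub], simp)
  have "norm_bounded_on dim_oracle (rot_blocks dim_oracle (\<lambda>\<beta>. amp (shift j \<beta>) - amp (shift m \<beta>))
     (\<lambda>\<beta>. - amp (- shift j \<beta>) - - amp (- shift m \<beta>))) (2*(2*eps/B)) {l. l div 2 = 2*j}"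
    by (rule norm_bounded_on_rot_blocks[OF n b0]) (use off_block on_block amp_diff in auto)
  then show "norm_bounded_on dim_oracle (adj (Opsi (hard_instance j)) - adj (Opsi (hard_instance m)))
      (4*eps/B) {p. p div 4 = j}"
    unfolding hard_instance_def
    by (simp add: rot_blocks_minus adj_rot_blocks) (rule norm_bounded_on_mono[OF _ sub], simp)
qed

lemma opt_vals_separated:
  "{i. \<bar>out i - 4\<bar> \<le> eps} \<inter> {i. \<bar>out i - 1 / (1/4 + eps/2)\<bar> \<le> eps} = {}"
proof -
  have "4 - 1 / (1/4 + eps/2) = 8*eps / (1 + 2*eps)" using eps_pos by (simp add: field_simps)
  also have "\<dots> > 2*eps" using eps_pos eps_le by (simp add: field_simps)
  finally show ?thesis by auto
qed

lemma query_lower_bound: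
  assumes U: "\<forall>t\<le>T. unitary (2*(m*1)*dim_oracle*k) (U t)"
    and succ: "\<forall>I\<in>hard_instance ` {..m}. success_prob (2*(m*1)*dim_oracle*k) k U q out T
       (Omu m 1 (\<lambda>_. 0) I) (Opsi I) (opt_val 1 m (1\<^sub>m 1) (A_of 1 2 1 I) (\<lambda>_. 1)) eps \<ge> 2/3"
  shows "real T \<ge> 1/20 * sqrt (real m) * B / eps"
proof -
  have D: "2*(m*1)*dim_oracle*k = 2*(m*dim_oracle*k)" by (simp add: mult_ac)
  have U': "\<forall>t\<le>T. unitary (2*(m*dim_oracle*k)) (U t)" using U unfolding D .
  let ?s = "\<lambda>z. alg_state (2*(m*dim_oracle*k)) k U q (1\<^sub>m m) (Opsi (hard_instance z)) T"
  have s: "?s z \<in> carrier_vec (2*(m*dim_oracle*k))" "vnorm2 (?s z) \<le> 1" for z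
    using alg_state_carrier_vnorm2_le[OF U' unitary_one unitary_Opsi] by auto
  have succ_z: "vnorm2_on {i. \<bar>out i - opt_val 1 m (1\<^sub>m 1) (A_of 1 2 1 (hard_instance z)) (\<lambda>_. 1)\<bar> \<le> eps}
      (?s z) \<ge> 2/3" if "z \<le> m" for z
  proof -
    have "success_prob (2*(m*dim_oracle*k)) k U q out T (1\<^sub>m m) (Opsi (hard_instance z))
        (opt_val 1 m (1\<^sub>m 1) (A_of 1 2 1 (hard_instance z)) (\<lambda>_. 1)) eps \<ge> 2/3"
      using succ that unfolding D Omu_trivial_encoding by blast
    then show ?thesis by (simp only: success_prob_eq_vnorm2_on[OF s(1)])
  qed
  have far: "vnorm (?s j - ?s m) \<ge> 1/5" if j: "j < m" for j
  proof (rule vnorm_diff_ge_if_separated)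
    show "dim_vec (?s m) = dim_vec (?s j)" using s(1)[of m] s(1)[of j] by simp
    show "vnorm2 (?s j) \<le> 1" by (rule s(2))
    show "vnorm2_on {i. \<bar>out i - 4\<bar> \<le> eps} (?s m) \<ge> 2/3"
      using succ_z[of m] unfolding opt_val_hard_instance by simp
    show "vnorm2_on {i. \<bar>out i - 1 / (1/4 + eps/2)\<bar> \<le> eps} (?s j) \<ge> 2/3"
      using succ_z[of j] j unfolding opt_val_hard_instance by simp
  qed (rule opt_vals_separated)
  have "real T \<ge> 1/5 * sqrt (real m) / (4*eps/B)"
    using m eps_pos B far Opsi_diff_norm_bounded
    by (intro hybrid_query_lower_bound[OF _ _ _ U' unitary_one unitary_Opsi unitary_Opsi,
          where h="\<lambda>p. p div 4"]) auto
  then show ?thesis using eps_pos B by (simp add: field_simps)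
qed

lemma hard_family:
  "\<exists>(n::nat) (a::nat) (e::nat) (L::nat) (enc :: real \<times> real \<times> real \<Rightarrow> nat)
        (C::complex mat) (b::nat \<Rightarrow> real) (F::qs_instance set).
        n \<ge> 1 \<and> a \<ge> 1 \<and> e \<ge> 1 \<and> L \<ge> 1 \<and> F \<noteq> {} \<and>
        inj_on enc {(mup I j, mum I j, muI I j) | I j. I \<in> F \<and> j < m} \<and>
        (\<forall>I\<in>F. \<forall>j<m. enc (mup I j, mum I j, muI I j) < L) \<and>
        hermitian n C \<and> diagonal_mat C \<and> opnorm_le1 n C \<and>
        (\<forall>I\<in>F. valid_instance m n a e B I \<and>
           (\<forall>j<m. diagonal_mat (A_of n a e I j) \<and> opnorm_le1 n (A_of n a e I j)) \<and>
           (\<exists>X. primal_optimal n m C (A_of n a e I) b X \<and> Re (mtrace X) \<le> 4) \<and>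
           (\<exists>y. dual_optimal n m C (A_of n a e I) b y \<and> (\<Sum>j<m. \<bar>y j\<bar>) \<le> 4)) \<and>
        (\<forall>(k::nat) (T::nat) (U::nat \<Rightarrow> complex mat) (q::nat \<Rightarrow> qkind) (out::nat \<Rightarrow> real).
           k \<ge> 1 \<and>
           (\<forall>t\<le>T. unitary (2 * (m * L) * (m * 2 * (n * a * e)) * k) (U t)) \<and>
           (\<forall>I\<in>F. success_prob (2 * (m * L) * (m * 2 * (n * a * e)) * k) k U q out T
                     (Omu m L enc I) (Opsi I) (opt_val n m C (A_of n a e I) b) eps \<ge> 2/3)
           \<longrightarrow> real T \<ge> 1/20 * sqrt (real m) * B / eps)"
proof (intro exI conjI)
  \<comment> \<open>all instances share mu^+ = mu^- = B/2 and mu^I = 0, so the mu-oracle is trivial (L = 1)\<close>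
  show "inj_on (\<lambda>_. 0) {(mup I j, mum I j, muI I j) | I j. I \<in> hard_instance ` {..m} \<and> j < m}"
    unfolding inj_on_def by (auto simp: hard_instance_def)
  show "hermitian 1 (1\<^sub>m 1)" "diagonal_mat (1\<^sub>m 1 :: complex mat)" "opnorm_le1 1 (1\<^sub>m 1)"
    unfolding hermitian_def adj_def diagonal_mat_def opnorm_le1_def by (auto intro!: eq_matI)
  show "\<forall>I\<in>hard_instance ` {..m}. valid_instance m 1 2 1 B I \<and>
     (\<forall>j<m. diagonal_mat (A_of 1 2 1 I j) \<and> opnorm_le1 1 (A_of 1 2 1 I j)) \<and>
     (\<exists>X. primal_optimal 1 m (1\<^sub>m 1) (A_of 1 2 1 I) (\<lambda>_. 1) X \<and> Re (mtrace X) \<le> 4) \<and>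
     (\<exists>y. dual_optimal 1 m (1\<^sub>m 1) (A_of 1 2 1 I) (\<lambda>_. 1) y \<and> (\<Sum>j<m. \<bar>y j\<bar>) \<le> 4)"
    using valid_hard_instance hard_instance_lp_properties by blast
  show "\<forall>k T U q out. k \<ge> 1 \<and> (\<forall>t\<le>T. unitary (2*(m*1)*dim_oracle*k) (U t)) \<and>
     (\<forall>I\<in>hard_instance ` {..m}. success_prob (2*(m*1)*dim_oracle*k) k U q out T
        (Omu m 1 (\<lambda>_. 0) I) (Opsi I) (opt_val 1 m (1\<^sub>m 1) (A_of 1 2 1 I) (\<lambda>_. 1)) eps \<ge> 2/3)
     \<longrightarrow> real T \<ge> 1/20 * sqrt (real m) * B / eps"
    using query_lower_bound by blast
qed auto

end

theorem corollary5p7: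
  shows "\<exists>c::real. c > 0 \<and> (\<exists>R0 r0 :: real.
    \<forall>(eps::real) (m::nat) (B::real). 0 < eps \<and> eps \<le> 1/2 \<and> m \<ge> 2 \<and> B \<ge> 1 \<longrightarrow>
     (\<exists>(n::nat) (a::nat) (e::nat) (L::nat) (enc :: real \<times> real \<times> real \<Rightarrow> nat)
        (C::complex mat) (b::nat \<Rightarrow> real) (F::qs_instance set).
        n \<ge> 1 \<and> a \<ge> 1 \<and> e \<ge> 1 \<and> L \<ge> 1 \<and> F \<noteq> {} \<and>
        inj_on enc {(mup I j, mum I j, muI I j) | I j. I \<in> F \<and> j < m} \<and>
        (\<forall>I\<in>F. \<forall>j<m. enc (mup I j, mum I j, muI I j) < L) \<and>
        hermitian n C \<and> diagonal_mat C \<and> opnorm_le1 n C \<and>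
        (\<forall>I\<in>F. valid_instance m n a e B I \<and>
           (\<forall>j<m. diagonal_mat (A_of n a e I j) \<and> opnorm_le1 n (A_of n a e I j)) \<and>
           (\<exists>X. primal_optimal n m C (A_of n a e I) b X \<and> Re (mtrace X) \<le> R0) \<and>
           (\<exists>y. dual_optimal n m C (A_of n a e I) b y \<and> (\<Sum>j<m. \<bar>y j\<bar>) \<le> r0)) \<and>
        (\<forall>(k::nat) (T::nat) (U::nat \<Rightarrow> complex mat) (q::nat \<Rightarrow> qkind) (out::nat \<Rightarrow> real).
           k \<ge> 1 \<and>
           (\<forall>t\<le>T. unitary (2 * (m * L) * (m * 2 * (n * a * e)) * k) (U t)) \<and>
           (\<forall>I\<in>F. success_prob (2 * (m * L) * (m * 2 * (n * a * e)) * k) k U q out T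
                     (Omu m L enc I) (Opsi I) (opt_val n m C (A_of n a e I) b) eps \<ge> 2/3)
           \<longrightarrow> real T \<ge> c * sqrt (real m) * B / eps)))"
  by (rule exI[of _ "1/20"], rule conjI, simp, intro exI[of _ "4::real"] allI impI)
    (blast intro: lp_hard_family.hard_family lp_hard_family.intro)

end
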